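(* Assume Assumption 1, Assumption 2 and the null hypothesis $H_0:\ T_i(1)=T_i(0)$ for all $i$, and condition on $\boldsymbol{T}(1),\boldsymbol{T}(0)$. Then $\mathbb{E}\{L\mid\boldsymbol{T}(1),\boldsymbol{T}(0)\}=0$ and $$\mathrm{Var}\{L\mid\boldsymbol{T}(1),\boldsymbol{T}(0)\}=\mathbb{E}\{U\mid\boldsymbol{T}(1),\boldsymbol{T}(0)\}=\sum_{k=1}^K\mathbb{E}\{V_k\mid\boldsymbol{T}(1),\boldsymbol{T}(0)\}=\sum_{k=1}^K\frac{n_k^2}{n_k-1}h_k(1-h_k)\phi_k(1-\phi_k)\Big\{g_k-\frac{1-(1-g_k)^{n_k}}{n_k}\Big\}.$$
   Context: There are $n$ units. Unit $i$ has potential event times $T_i(1),T_i(0)\ge 0$, potential censoring times $C_i(1),C_i(0)\in[0,\infty]$, and treatment indicator $Z_i\in\{0,1\}$; bold letters denote $n$-vectors. Assumption 1: conditional on $\boldsymbol{T}(1),\boldsymbol{T}(0),\boldsymbol{C}(1),\boldsymbol{C}(0)$, the $Z_i$ are i.i.d. Bernoulli$(p_1)$, $p_1=1-p_0\in(0,1)$. Assumption 2: $(\boldsymbol{C}(1),\boldsymbol{C}(0))$ is independent of $(\boldsymbol{T}(1),\boldsymbol{T}(0))$ and the pairs $(C_i(1),C_i(0))$ are i.i.d. across $i$. Let $G_z(c)=\Pr(C_i(z)\ge c)$, $G(t)=p_1G_1(t)+p_0G_0(t)$. Realized: $T_i=Z_iT_i(1)+(1-Z_i)T_i(0)$, $C_i=Z_iC_i(1)+(1-Z_i)C_i(0)$,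 $W_i=\min\{T_i,C_i\}$, $\Delta_i=\mathbb{1}(T_i\le C_i)$. Let $t_1<\dots<t_K$ be the distinct values of $\{T_i(0)\}$; $d_k=\#\{i:T_i(0)=t_k\}$, $n_k=\#\{i:T_i(0)\ge t_k\}$, $h_k=d_k/n_k$, $g_k=G(t_k)$, $\phi_k=p_1G_1(t_k)/G(t_k)$. For $1\le k\le K$: $N_{1k}=\sum_iZ_i\mathbb{1}(W_i\ge t_k)$, $N_{0k}=\sum_i(1-Z_i)\mathbb{1}(W_i\ge t_k)$, $N_k=N_{1k}+N_{0k}$, $D_{1k}=\sum_iZ_i\Delta_i\mathbb{1}(W_i=t_k)$, $D_k=\sum_i\Delta_i\mathbb{1}(W_i=t_k)$, $M_k=D_kN_{1k}/N_k$, $V_k=D_k(N_k-D_k)N_{1k}N_{0k}/\{N_k^2(N_k-1)\}$, with the convention $0/0:=0$. $L=\sum_{k=1}^K(D_{1k}-M_k)$, $U=\sum_{k=1}^KV_k$. *)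

theory Defs
  imports "HOL-Probability.Probability"
begin

text \<open>Potential event times t1 i = T_i(1), t0 i = T_i(0) (fixed, i.e.
  conditioned on), treatment indicators z i = Z_i, potential censoring times
  c1 i = C_i(1), c0 i = C_i(0) in [0, infinity] (type ennreal).\<close>

definition realT :: "(nat \<Rightarrow> real) \<Rightarrow> (nat \<Rightarrow> real) \<Rightarrow> (nat \<Rightarrow> bool) \<Rightarrow> nat \<Rightarrow> real" where
  "realT t1 t0 z i = (if z i then t1 i else t0 i)"

definition realC :: "(nat \<Rightarrow> ennreal) \<Rightarrow> (nat \<Rightarrow> ennreal) \<Rightarrow> (nat \<Rightarrow> bool) \<Rightarrow> nat \<Rightarrow> ennreal" where
  "realC c1 c0 z i = (if z i then c1 i else c0 i)"

definition obsW :: "(nat \<Rightarrow> real) \<Rightarrow> (nat \<Rightarrow> real) \<Rightarrow> (nat \<Rightarrow> ennreal) \<Rightarrow> (nat \<Rightarrow> ennreal)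
    \<Rightarrow> (nat \<Rightarrow> bool) \<Rightarrow> nat \<Rightarrow> ennreal" where
  "obsW t1 t0 c1 c0 z i = min (ennreal (realT t1 t0 z i)) (realC c1 c0 z i)"

definition obsDelta :: "(nat \<Rightarrow> real) \<Rightarrow> (nat \<Rightarrow> real) \<Rightarrow> (nat \<Rightarrow> ennreal) \<Rightarrow> (nat \<Rightarrow> ennreal)
    \<Rightarrow> (nat \<Rightarrow> bool) \<Rightarrow> nat \<Rightarrow> bool" where
  "obsDelta t1 t0 c1 c0 z i = (ennreal (realT t1 t0 z i) \<le> realC c1 c0 z i)"

text \<open>Risk-set and event counts at time s (s ranges over the distinct values t_k of T(0)).\<close>

definition N1 :: "nat \<Rightarrow> (nat \<Rightarrow> real) \<Rightarrow> (nat \<Rightarrow> real) \<Rightarrow> (nat \<Rightarrow> ennreal) \<Rightarrow> (nat \<Rightarrow> ennreal)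
    \<Rightarrow> (nat \<Rightarrow> bool) \<Rightarrow> real \<Rightarrow> real" where
  "N1 n t1 t0 c1 c0 z s = real (card {i \<in> {..<n}. z i \<and> ennreal s \<le> obsW t1 t0 c1 c0 z i})"

definition N0 :: "nat \<Rightarrow> (nat \<Rightarrow> real) \<Rightarrow> (nat \<Rightarrow> real) \<Rightarrow> (nat \<Rightarrow> ennreal) \<Rightarrow> (nat \<Rightarrow> ennreal)
    \<Rightarrow> (nat \<Rightarrow> bool) \<Rightarrow> real \<Rightarrow> real" where
  "N0 n t1 t0 c1 c0 z s = real (card {i \<in> {..<n}. \<not> z i \<and> ennreal s \<le> obsW t1 t0 c1 c0 z i})"

definition Ntot :: "nat \<Rightarrow> (nat \<Rightarrow> real) \<Rightarrow> (nat \<Rightarrow> real) \<Rightarrow> (nat \<Rightarrow> ennreal) \<Rightarrow> (nat \<Rightarrow> ennreal)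
    \<Rightarrow> (nat \<Rightarrow> bool) \<Rightarrow> real \<Rightarrow> real" where
  "Ntot n t1 t0 c1 c0 z s = N1 n t1 t0 c1 c0 z s + N0 n t1 t0 c1 c0 z s"

definition D1 :: "nat \<Rightarrow> (nat \<Rightarrow> real) \<Rightarrow> (nat \<Rightarrow> real) \<Rightarrow> (nat \<Rightarrow> ennreal) \<Rightarrow> (nat \<Rightarrow> ennreal)
    \<Rightarrow> (nat \<Rightarrow> bool) \<Rightarrow> real \<Rightarrow> real" where
  "D1 n t1 t0 c1 c0 z s = real (card {i \<in> {..<n}. z i \<and> obsDelta t1 t0 c1 c0 z i
      \<and> obsW t1 t0 c1 c0 z i = ennreal s})"

definition Dtot :: "nat \<Rightarrow> (nat \<Rightarrow> real) \<Rightarrow> (nat \<Rightarrow> real) \<Rightarrow> (nat \<Rightarrow> ennreal) \<Rightarrow> (nat \<Rightarrow> ennreal)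
    \<Rightarrow> (nat \<Rightarrow> bool) \<Rightarrow> real \<Rightarrow> real" where
  "Dtot n t1 t0 c1 c0 z s = real (card {i \<in> {..<n}. obsDelta t1 t0 c1 c0 z i
      \<and> obsW t1 t0 c1 c0 z i = ennreal s})"

text \<open>M_k and V_k; real division by zero is zero in Isabelle, matching the convention 0/0 := 0.\<close>

definition Mk :: "nat \<Rightarrow> (nat \<Rightarrow> real) \<Rightarrow> (nat \<Rightarrow> real) \<Rightarrow> (nat \<Rightarrow> ennreal) \<Rightarrow> (nat \<Rightarrow> ennreal)
    \<Rightarrow> (nat \<Rightarrow> bool) \<Rightarrow> real \<Rightarrow> real" where
  "Mk n t1 t0 c1 c0 z s = Dtot n t1 t0 c1 c0 z s * N1 n t1 t0 c1 c0 z s / Ntot n t1 t0 c1 c0 z s"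

definition Vk :: "nat \<Rightarrow> (nat \<Rightarrow> real) \<Rightarrow> (nat \<Rightarrow> real) \<Rightarrow> (nat \<Rightarrow> ennreal) \<Rightarrow> (nat \<Rightarrow> ennreal)
    \<Rightarrow> (nat \<Rightarrow> bool) \<Rightarrow> real \<Rightarrow> real" where
  "Vk n t1 t0 c1 c0 z s =
     (let D = Dtot n t1 t0 c1 c0 z s; N = Ntot n t1 t0 c1 c0 z s;
          A = N1 n t1 t0 c1 c0 z s; B = N0 n t1 t0 c1 c0 z s
      in D * (N - D) * A * B / (N ^ 2 * (N - 1)))"

definition times0 :: "nat \<Rightarrow> (nat \<Rightarrow> real) \<Rightarrow> real set" where
  "times0 n t0 = t0 ` {..<n}"

definition logrankL :: "nat \<Rightarrow> (nat \<Rightarrow> real) \<Rightarrow> (nat \<Rightarrow> real) \<Rightarrow> (nat \<Rightarrow> ennreal) \<Rightarrow> (nat \<Rightarrow> ennreal)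
    \<Rightarrow> (nat \<Rightarrow> bool) \<Rightarrow> real" where
  "logrankL n t1 t0 c1 c0 z =
     (\<Sum>s\<in>times0 n t0. D1 n t1 t0 c1 c0 z s - Mk n t1 t0 c1 c0 z s)"

definition logrankU :: "nat \<Rightarrow> (nat \<Rightarrow> real) \<Rightarrow> (nat \<Rightarrow> real) \<Rightarrow> (nat \<Rightarrow> ennreal) \<Rightarrow> (nat \<Rightarrow> ennreal)
    \<Rightarrow> (nat \<Rightarrow> bool) \<Rightarrow> real" where
  "logrankU n t1 t0 c1 c0 z = (\<Sum>s\<in>times0 n t0. Vk n t1 t0 c1 c0 z s)"

definition dk :: "nat \<Rightarrow> (nat \<Rightarrow> real) \<Rightarrow> real \<Rightarrow> real" where
  "dk n t0 s = real (card {i \<in> {..<n}. t0 i = s})"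

definition nk :: "nat \<Rightarrow> (nat \<Rightarrow> real) \<Rightarrow> real \<Rightarrow> nat" where
  "nk n t0 s = card {i \<in> {..<n}. s \<le> t0 i}"

definition hk :: "nat \<Rightarrow> (nat \<Rightarrow> real) \<Rightarrow> real \<Rightarrow> real" where
  "hk n t0 s = dk n t0 s / real (nk n t0 s)"

text \<open>Censoring survivor functions, from the common law Q of the pair (C_i(1), C_i(0)).\<close>

definition Gsurv1 :: "(ennreal \<times> ennreal) measure \<Rightarrow> real \<Rightarrow> real" where
  "Gsurv1 Q c = measure Q {x \<in> space Q. ennreal c \<le> fst x}"

definition Gsurv0 :: "(ennreal \<times> ennreal) measure \<Rightarrow> real \<Rightarrow> real" where
  "Gsurv0 Q c = measure Q {x \<in> space Q. ennreal c \<le> snd x}"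

definition Gmix :: "real \<Rightarrow> (ennreal \<times> ennreal) measure \<Rightarrow> real \<Rightarrow> real" where
  "Gmix p1 Q c = p1 * Gsurv1 Q c + (1 - p1) * Gsurv0 Q c"

definition phik :: "real \<Rightarrow> (ennreal \<times> ennreal) measure \<Rightarrow> real \<Rightarrow> real" where
  "phik p1 Q c = p1 * Gsurv1 Q c / Gmix p1 Q c"

end

theory Submission
  imports Defs
begin

(* Under H0 the event times are fixed, so all randomness lies in the i.i.d. unit data
   (Z_i, C_i(1), C_i(0)).  At a time t_k with risk set P = {i. T_i(0) >= t_k} and event set
   A = {i. T_i(0) = t_k}, the increment D_1k - M_k is the sum over A of the scores
   r_u (z_u - N_1k / N_k), where r_u says that unit u is uncensored at t_k and z_u that it is
   treated.  The scores of the units in P are exchangeable and sum to zero.  This gives mean zero,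
   makes increments at different times uncorrelated (an earlier increment is invariant under
   permutations of a later risk set), and yields
     E (D_1k - M_k)^2 = E V_k = d (n - d) / (n (n - 1)) * E (N_1k N_0k / N_k)
   with n = n_k, d = d_k.  The last expectation is computed by writing 1 / N_k, for two distinct
   units at risk, as 1 / (2 + number of other units at risk), which does not depend on those two
   units; expanding N_k - 1 + [N_k = 0] the same way eliminates the remaining unknown. *)

section \<open>Counting identities for one risk set\<close>

(* For the risk set P at time t_k, r u means that unit u is still uncensored and z u that it is
   treated: risk_count P r is N_k, treated_count P r z is N_1k, treatment_variation P r z is
   N_1k N_0k / N_k, and for the event set A, logrank_increment P A r z is D_1k - M_k and
   hypergeom_variance P A r z is V_k. *)

definition risk_count :: "'i set \<Rightarrow> ('i \<Rightarrow> bool) \<Rightarrow> real" where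
  "risk_count P r = (\<Sum>u\<in>P. of_bool (r u))"

definition treated_count :: "'i set \<Rightarrow> ('i \<Rightarrow> bool) \<Rightarrow> ('i \<Rightarrow> bool) \<Rightarrow> real" where
  "treated_count P r z = (\<Sum>u\<in>P. of_bool (r u \<and> z u))"

definition score :: "'i set \<Rightarrow> ('i \<Rightarrow> bool) \<Rightarrow> ('i \<Rightarrow> bool) \<Rightarrow> 'i \<Rightarrow> real" where
  "score P r z u = of_bool (r u) * (of_bool (z u) - treated_count P r z / risk_count P r)"

definition logrank_increment :: "'i set \<Rightarrow> 'i set \<Rightarrow> ('i \<Rightarrow> bool) \<Rightarrow> ('i \<Rightarrow> bool) \<Rightarrow> real" where
  "logrank_increment P A r z = (\<Sum>u\<in>A. score P r z u)"

definition treatment_variation :: "'i set \<Rightarrow> ('i \<Rightarrow> bool) \<Rightarrow> ('i \<Rightarrow> bool) \<Rightarrow> real" where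
  "treatment_variation P r z =
     treated_count P r z * (risk_count P r - treated_count P r z) / risk_count P r"

definition pair_weight :: "'i set \<Rightarrow> ('i \<Rightarrow> bool) \<Rightarrow> ('i \<Rightarrow> bool) \<Rightarrow> real" where
  "pair_weight P r z = treatment_variation P r z / (risk_count P r * (risk_count P r - 1))"

definition hypergeom_variance :: "'i set \<Rightarrow> 'i set \<Rightarrow> ('i \<Rightarrow> bool) \<Rightarrow> ('i \<Rightarrow> bool) \<Rightarrow> real" where
  "hypergeom_variance P A r z = risk_count A r * (risk_count P r - risk_count A r) * pair_weight P r z"

(* Equal to 1 / risk_count P r when u and v are both at risk, but independent of r u and r v. *)
definition inverse_risk_count_excluding :: "'i set \<Rightarrow> ('i \<Rightarrow> bool) \<Rightarrow> 'i \<Rightarrow> 'i \<Rightarrow> real" where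
  "inverse_risk_count_excluding P r u v = 1 / (2 + risk_count (P - {u, v}) r)"

lemma hypergeom_factor_rearrange:
  fixes K d q g e :: real
  shows "d * (K - d) / (K * (K - 1)) * (q * (1 - q) * (K * g - 1 + e))
       = K\<^sup>2 / (K - 1) * (d / K) * (1 - d / K) * q * (1 - q) * (g - (1 - e) / K)"
  by (cases "K = 0 \<or> K = 1") (auto simp: field_simps power2_eq_square)

lemma sum_product_diag_offdiag:
  fixes f g :: "'i \<Rightarrow> 'a::comm_ring"
  assumes "finite A"
  shows "sum f A * sum g A = (\<Sum>u\<in>A. f u * g u) + (\<Sum>u\<in>A. \<Sum>v\<in>A - {u}. f u * g v)"
  using assms by (simp add: sum_product sum.remove sum.distrib)

lemma sum_offdiag_const:
  fixes c :: "'a::comm_ring_1"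
  assumes "finite A"
  shows "(\<Sum>u\<in>A. \<Sum>v\<in>A - {u}. c) = of_nat (card A) * (of_nat (card A) - 1) * c"
proof -
  have "(\<Sum>v\<in>A - {u}. c) = (of_nat (card A) - 1) * c" if "u \<in> A" for u
  proof -
    have "1 \<le> card A" using assms that by (auto simp: Suc_le_eq card_gt_0_iff)
    then show ?thesis using assms that by (simp add: card_Diff_singleton of_nat_diff)
  qed
  then show ?thesis by (simp add: mult.assoc)
qed

lemma of_bool_Ball_eq_prod:
  "finite P \<Longrightarrow> of_bool (\<forall>u\<in>P. f u) = (\<Prod>u\<in>P. of_bool (f u) :: 'a::comm_semiring_1)"
  by (cases "\<forall>u\<in>P. f u") (auto intro!: prod_zero)

lemma risk_count_nonneg: "0 \<le> risk_count P r"
  by (simp add: risk_count_def sum_nonneg)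

lemma treated_count_nonneg: "0 \<le> treated_count P r z"
  by (simp add: treated_count_def sum_nonneg)

lemma treated_count_le_risk_count: "treated_count P r z \<le> risk_count P r"
  unfolding treated_count_def risk_count_def by (intro sum_mono) simp

lemma risk_count_le_card: "risk_count P r \<le> card P"
  by (cases "finite P") (simp_all add: risk_count_def card_mono)

lemma risk_count_minus_treated_count:
  "risk_count P r - treated_count P r z = treated_count P r (\<lambda>u. \<not> z u)"
  unfolding risk_count_def treated_count_def by (auto simp flip: sum_subtractf intro!: sum.cong)

lemma risk_count_eq_0_iff:
  "finite P \<Longrightarrow> risk_count P r = 0 \<longleftrightarrow> (\<forall>u\<in>P. \<not> r u)"
  unfolding risk_count_def by (subst sum_nonneg_eq_0_iff) auto

lemma risk_count_of_nat: "finite P \<Longrightarrow> \<exists>m::nat. risk_count P r = m"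
  by (simp add: risk_count_def)

lemma treated_count_of_nat: "finite P \<Longrightarrow> \<exists>m::nat. treated_count P r z = m"
  by (simp add: treated_count_def)

lemma treatment_variation_eq_0:
  assumes "finite P" and "risk_count P r \<le> 1"
  shows "treatment_variation P r z = 0"
proof -
  obtain a b :: nat where "risk_count P r = a" "treated_count P r z = b"
    using risk_count_of_nat treated_count_of_nat assms(1) by metis
  with assms(2) treated_count_le_risk_count[of P r z]
  have "b = 0 \<or> b = a" by linarith
  then show ?thesis
    using \<open>risk_count P r = a\<close> \<open>treated_count P r z = b\<close> by (auto simp: treatment_variation_def)
qed

lemma abs_score_le_1: "\<bar>score P r z u\<bar> \<le> 1"
proof -
  have "0 \<le> treated_count P r z / risk_count P r" "treated_count P r z / risk_count P r \<le> 1"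
    using treated_count_nonneg[of P r z] treated_count_le_risk_count[of P r z]
    by (auto simp: divide_le_eq_1)
  then show ?thesis by (auto simp: score_def)
qed

lemma score_eq:
  "score P r z u = of_bool (r u \<and> z u) - of_bool (r u) * (treated_count P r z / risk_count P r)"
  by (simp add: score_def algebra_simps)

lemma sum_score_eq_0: "finite P \<Longrightarrow> (\<Sum>u\<in>P. score P r z u) = 0"
  using treated_count_le_risk_count[of P r z] treated_count_nonneg[of P r z]
  unfolding score_eq sum_subtractf sum_distrib_right[symmetric]
  by (fold treated_count_def risk_count_def) auto

lemma sum_score_sq: "finite P \<Longrightarrow> (\<Sum>u\<in>P. (score P r z u)\<^sup>2) = treatment_variation P r z"
proof -
  define q where "q = treated_count P r z / risk_count P r"
  have "(score P r z u)\<^sup>2 = of_bool (r u \<and> z u) * (1 - 2 * q) + of_bool (r u) * q\<^sup>2" for u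
    by (simp add: score_def q_def power2_eq_square algebra_simps)
  then have "(\<Sum>u\<in>P. (score P r z u)\<^sup>2)
      = treated_count P r z * (1 - 2 * q) + risk_count P r * q\<^sup>2"
    by (simp add: treated_count_def risk_count_def sum_distrib_right sum.distrib
        del: sum_of_bool_eq)
  also have "\<dots> = treatment_variation P r z"
    using treated_count_le_risk_count[of P r z] treated_count_nonneg[of P r z]
    by (cases "risk_count P r = 0")
      (auto simp: treatment_variation_def q_def field_simps power2_eq_square)
  finally show ?thesis .
qed

lemma sum_score_offdiag:
  "finite P \<Longrightarrow> (\<Sum>u\<in>P. \<Sum>v\<in>P - {u}. score P r z u * score P r z v) = - treatment_variation P r z"
  using sum_product_diag_offdiag[of P "score P r z" "score P r z"]
  by (simp add: sum_score_eq_0 flip: sum_score_sq power2_eq_square)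

lemma sum_offdiag_risk:
  assumes "finite P"
  shows "(\<Sum>u\<in>P. \<Sum>v\<in>P - {u}. of_bool (r u) * of_bool (r v))
       = risk_count P r * (risk_count P r - 1)"
proof -
  have "risk_count P r * risk_count P r
      = risk_count P r + (\<Sum>u\<in>P. \<Sum>v\<in>P - {u}. of_bool (r u) * of_bool (r v))"
    unfolding risk_count_def sum_product_diag_offdiag[OF assms] by (simp flip: of_bool_conj)
  then show ?thesis by (simp add: algebra_simps)
qed

lemma sum_offdiag_pair_weight:
  assumes "finite P"
  shows "(\<Sum>u\<in>P. \<Sum>v\<in>P - {u}. of_bool (r u) * of_bool (r v)
            * pair_weight P r z)
       = treatment_variation P r z"
proof (cases "risk_count P r \<le> 1")
  case True
  then show ?thesis using assms by (simp add: treatment_variation_eq_0 pair_weight_def)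
next
  case False
  then show ?thesis
    using assms by (simp only: sum_distrib_right[symmetric] sum_offdiag_risk) (simp add: pair_weight_def)
qed

lemma hypergeom_variance_eq_sum:
  assumes "finite P" and "A \<subseteq> P"
  shows "hypergeom_variance P A r z
       = (\<Sum>u\<in>A. \<Sum>v\<in>P - A. of_bool (r u) * of_bool (r v)
            * pair_weight P r z)"
proof -
  have "risk_count P r - risk_count A r = risk_count (P - A) r"
    using assms by (simp add: risk_count_def sum_diff del: sum_of_bool_eq)
  then have "risk_count A r * (risk_count P r - risk_count A r)
      = (\<Sum>u\<in>A. \<Sum>v\<in>P - A. of_bool (r u) * of_bool (r v))"
    by (simp add: risk_count_def sum_product del: sum_of_bool_eq)
  then show ?thesis by (simp only: hypergeom_variance_def sum_distrib_right)
qed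

lemma logrank_increment_eq:
  "logrank_increment P A r z
     = treated_count A r z - risk_count A r * treated_count P r z / risk_count P r"
  unfolding logrank_increment_def score_eq sum_subtractf sum_distrib_right[symmetric]
  by (simp add: treated_count_def risk_count_def del: sum_of_bool_eq)

lemma logrank_increment_sq:
  "finite A \<Longrightarrow> (logrank_increment P A r z)\<^sup>2
     = (\<Sum>u\<in>A. (score P r z u)\<^sup>2) + (\<Sum>u\<in>A. \<Sum>v\<in>A - {u}. score P r z u * score P r z v)"
  by (simp add: logrank_increment_def power2_eq_square sum_product_diag_offdiag)

lemma abs_logrank_increment_le: "\<bar>logrank_increment P A r z\<bar> \<le> card A"
proof -
  have "\<bar>logrank_increment P A r z\<bar> \<le> (\<Sum>u\<in>A. \<bar>score P r z u\<bar>)"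
    unfolding logrank_increment_def by (rule sum_abs)
  also have "\<dots> \<le> of_nat (card A) * 1"
    by (rule sum_bounded_above) (rule abs_score_le_1)
  finally show ?thesis by simp
qed

lemma treatment_variation_bounds:
  "0 \<le> treatment_variation P r z" "treatment_variation P r z \<le> risk_count P r"
proof -
  have "treated_count P r z * (risk_count P r - treated_count P r z) \<le> risk_count P r * risk_count P r"
    using treated_count_nonneg[of P r z] treated_count_le_risk_count[of P r z]
    by (intro mult_mono) auto
  then show "treatment_variation P r z \<le> risk_count P r"
    using risk_count_nonneg[of P r] by (simp add: treatment_variation_def divide_le_eq)
  show "0 \<le> treatment_variation P r z"
    using treated_count_nonneg[of P r z] treated_count_le_risk_count[of P r z]
    by (simp add: treatment_variation_def)
qed

lemma abs_pair_weight_le_1: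
  assumes "finite P"
  shows "\<bar>pair_weight P r z\<bar> \<le> 1"
proof (cases "risk_count P r \<le> 1")
  case True
  then show ?thesis using assms by (simp add: pair_weight_def treatment_variation_eq_0)
next
  case False
  then have "risk_count P r * 1 \<le> risk_count P r * (risk_count P r - 1)"
    using risk_count_of_nat[OF assms, of r] by (intro mult_left_mono) auto
  then have "treatment_variation P r z \<le> risk_count P r * (risk_count P r - 1)"
    using treatment_variation_bounds(2)[of P r z] by linarith
  then show ?thesis
    using False treatment_variation_bounds(1)[of P r z] by (simp add: pair_weight_def divide_le_eq_1)
qed

lemma abs_inverse_risk_count_excluding_le_1: "\<bar>inverse_risk_count_excluding P r u v\<bar> \<le> 1"
  using risk_count_nonneg[of "P - {u, v}" r] by (simp add: inverse_risk_count_excluding_def)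

lemma inverse_risk_count_excluding_cong:
  assumes "\<And>w. w \<in> P - {u, v} \<Longrightarrow> r w = r' w"
  shows "inverse_risk_count_excluding P r u v = inverse_risk_count_excluding P r' u v"
proof -
  have "risk_count (P - {u, v}) r = risk_count (P - {u, v}) r'"
    unfolding risk_count_def using assms by (intro sum.cong) auto
  then show ?thesis by (simp add: inverse_risk_count_excluding_def)
qed

lemma inverse_risk_count_eq_excluding:
  assumes "finite P" "u \<in> P" "v \<in> P" "u \<noteq> v" "r u" "r v"
  shows "1 / risk_count P r = inverse_risk_count_excluding P r u v"
proof -
  have "risk_count P r = risk_count (P - {u, v}) r + risk_count {u, v} r"
    unfolding risk_count_def using assms by (intro sum.subset_diff) auto
  then have "risk_count P r = 2 + risk_count (P - {u, v}) r"
    using assms by (simp add: risk_count_def del: sum_of_bool_eq)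
  then show ?thesis by (simp add: inverse_risk_count_excluding_def)
qed

lemma treatment_variation_eq_sum_pairs:
  assumes "finite P"
  shows "treatment_variation P r z
       = (\<Sum>u\<in>P. \<Sum>v\<in>P - {u}. of_bool (r u \<and> z u) * of_bool (r v \<and> \<not> z v)
            * inverse_risk_count_excluding P r u v)"
proof -
  have "treated_count P r z * (risk_count P r - treated_count P r z)
      = (\<Sum>u\<in>P. \<Sum>v\<in>P - {u}. of_bool (r u \<and> z u) * of_bool (r v \<and> \<not> z v))"
    unfolding risk_count_minus_treated_count
    unfolding treated_count_def sum_product_diag_offdiag[OF assms] by (simp add: sum.neutral)
  then have "treatment_variation P r z
      = (\<Sum>u\<in>P. \<Sum>v\<in>P - {u}. of_bool (r u \<and> z u) * of_bool (r v \<and> \<not> z v) * (1 / risk_count P r))"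
    by (simp add: treatment_variation_def sum_divide_distrib)
  also have "\<dots> = (\<Sum>u\<in>P. \<Sum>v\<in>P - {u}. of_bool (r u \<and> z u) * of_bool (r v \<and> \<not> z v)
            * inverse_risk_count_excluding P r u v)"
    using assms by (intro sum.cong refl) (auto simp: inverse_risk_count_eq_excluding)
  finally show ?thesis .
qed

(* The indicator compensates for the convention 1 / 0 = 0 when nobody is at risk. *)
lemma risk_count_eq_sum_pairs:
  assumes "finite P"
  shows "risk_count P r - 1 + of_bool (\<forall>u\<in>P. \<not> r u)
       = (\<Sum>u\<in>P. \<Sum>v\<in>P - {u}. of_bool (r u) * of_bool (r v) * inverse_risk_count_excluding P r u v)"
proof -
  have "risk_count P r - 1 + of_bool (\<forall>u\<in>P. \<not> r u)
      = (\<Sum>u\<in>P. \<Sum>v\<in>P - {u}. of_bool (r u) * of_bool (r v)) * (1 / risk_count P r)"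
    unfolding sum_offdiag_risk[OF assms] using assms
    by (cases "risk_count P r = 0") (simp_all add: risk_count_eq_0_iff[symmetric])
  also have "\<dots> = (\<Sum>u\<in>P. \<Sum>v\<in>P - {u}. of_bool (r u) * of_bool (r v) * inverse_risk_count_excluding P r u v)"
    unfolding sum_distrib_right
    using assms by (intro sum.cong refl) (auto simp: inverse_risk_count_eq_excluding)
  finally show ?thesis .
qed

lemma risk_count_permute:
  assumes "\<pi> permutes P" and "\<And>u. u \<in> P \<Longrightarrow> r' u = r (\<pi> u)"
  shows "risk_count P r' = risk_count P r"
proof -
  have "risk_count P r = (\<Sum>u\<in>P. of_bool (r (\<pi> u)))"
    unfolding risk_count_def by (subst sum.permute[OF assms(1)]) simp
  also have "\<dots> = risk_count P r'"
    unfolding risk_count_def using assms(2) by (intro sum.cong) auto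
  finally show ?thesis ..
qed

lemma treated_count_permute:
  assumes "\<pi> permutes P" and "\<And>u. u \<in> P \<Longrightarrow> r' u = r (\<pi> u) \<and> z' u = z (\<pi> u)"
  shows "treated_count P r' z' = treated_count P r z"
proof -
  have "risk_count P (\<lambda>u. r' u \<and> z' u) = risk_count P (\<lambda>u. r u \<and> z u)"
    using assms(2) by (intro risk_count_permute[OF assms(1)]) auto
  then show ?thesis by (simp add: risk_count_def treated_count_def del: sum_of_bool_eq)
qed

context
  fixes \<pi> :: "'i \<Rightarrow> 'i" and P :: "'i set" and r' r z' z :: "'i \<Rightarrow> bool"
  assumes perm: "\<pi> permutes P" and permuted: "\<And>u. u \<in> P \<Longrightarrow> r' u = r (\<pi> u) \<and> z' u = z (\<pi> u)"
begin

lemma risk_count_treated_count_permute: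
  "risk_count P r' = risk_count P r" "treated_count P r' z' = treated_count P r z"
  using permuted by (auto intro: risk_count_permute[OF perm] treated_count_permute[OF perm])

lemma score_permute: "j \<in> P \<Longrightarrow> score P r' z' j = score P r z (\<pi> j)"
  using permuted by (simp add: score_def risk_count_treated_count_permute)

lemma pair_weight_permute: "pair_weight P r' z' = pair_weight P r z"
  by (simp add: pair_weight_def treatment_variation_def risk_count_treated_count_permute)

lemma logrank_increment_permute:
  assumes "A \<subseteq> P" and "\<And>u. u \<in> A \<Longrightarrow> \<pi> u = u"
  shows "logrank_increment P A r' z' = logrank_increment P A r z"
  unfolding logrank_increment_def using assms
  by (intro sum.cong refl) (auto simp: score_permute)

end

section \<open>Exchangeable i.i.d. units\<close>

lemma integral_of_bool: "(\<integral>x. of_bool (F x) \<partial>M) = measure M {x \<in> space M. F x}"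
proof -
  have "(\<integral>x. of_bool (F x) \<partial>M) = (\<integral>x. indicator {x \<in> space M. F x} x \<partial>M)"
    by (rule Bochner_Integration.integral_cong) auto
  also have "\<dots> = measure M {x \<in> space M. F x}"
    by (simp add: Int_absorb2 subsetI)
  finally show ?thesis .
qed

lemma integral_double_sum:
  fixes F :: "'i \<Rightarrow> 'j \<Rightarrow> 'a \<Rightarrow> real"
  assumes "\<And>u v. u \<in> U \<Longrightarrow> v \<in> V u \<Longrightarrow> integrable M (F u v)"
  shows "(\<integral>x. (\<Sum>u\<in>U. \<Sum>v\<in>V u. F u v x) \<partial>M) = (\<Sum>u\<in>U. \<Sum>v\<in>V u. \<integral>x. F u v x \<partial>M)"
  using assms
  by (subst Bochner_Integration.integral_sum)
    (auto intro!: Bochner_Integration.integrable_sum sum.cong Bochner_Integration.integral_sum)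

locale iid_units = prob_space \<nu> for \<nu> :: "'b measure" +
  fixes I :: "'i set"
  assumes finite_units: "finite I"
begin

abbreviation \<Omega> :: "('i \<Rightarrow> 'b) measure" where
  "\<Omega> \<equiv> PiM I (\<lambda>_. \<nu>)"

sublocale units: product_prob_space "\<lambda>_. \<nu>" I
  by unfold_locales

lemma integrable_bounded:
  fixes F :: "('i \<Rightarrow> 'b) \<Rightarrow> real"
  assumes "F \<in> borel_measurable \<Omega>" and "\<And>x. \<bar>F x\<bar> \<le> B"
  shows "integrable \<Omega> F"
  using assms by (intro units.integrable_const_bound[where B = B]) auto

lemma integral_permute:
  fixes F :: "('i \<Rightarrow> 'b) \<Rightarrow> real"
  assumes "\<pi> permutes I" and F: "F \<in> borel_measurable \<Omega>"
  shows "(\<integral>x. F (\<lambda>u\<in>I. x (\<pi> u)) \<partial>\<Omega>) = (\<integral>x. F x \<partial>\<Omega>)"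
proof -
  have \<pi>: "inj_on \<pi> I" "\<pi> \<in> I \<rightarrow> I"
    using permutes_inj_on[OF assms(1)] permutes_in_image[OF assms(1)] by auto
  have "(\<lambda>x. \<lambda>u\<in>I. x (\<pi> u)) \<in> measurable \<Omega> \<Omega>"
    using \<pi>(2) by (intro measurable_restrict) (auto intro: measurable_component_singleton)
  moreover have "distr \<Omega> \<Omega> (\<lambda>x. \<lambda>u\<in>I. x (\<pi> u)) = \<Omega>"
    using distr_PiM_reindex[of I "\<lambda>_. \<nu>" \<pi> I] \<pi> prob_space_axioms by simp
  ultimately show ?thesis
    using integral_distr[of "\<lambda>x. \<lambda>u\<in>I. x (\<pi> u)" \<Omega> \<Omega> F] F by simp
qed

lemma integral_exchangeable:
  fixes F :: "'i \<Rightarrow> ('i \<Rightarrow> 'b) \<Rightarrow> real"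
  assumes "P \<subseteq> I" "i \<in> P"
    and F_int: "\<And>j. j \<in> P \<Longrightarrow> integrable \<Omega> (F j)"
    and F_perm: "\<And>\<pi> x. \<pi> permutes P \<Longrightarrow> x \<in> space \<Omega> \<Longrightarrow> F i (\<lambda>u\<in>I. x (\<pi> u)) = F (\<pi> i) x"
  shows "(\<integral>x. F i x \<partial>\<Omega>) = (\<integral>x. (\<Sum>j\<in>P. F j x) \<partial>\<Omega>) / card P"
proof -
  have "(\<integral>x. F j x \<partial>\<Omega>) = (\<integral>x. F i x \<partial>\<Omega>)" if "j \<in> P" for j
  proof -
    have \<tau>: "Transposition.transpose i j permutes P" using \<open>i \<in> P\<close> \<open>j \<in> P\<close> by (rule permutes_swap_id)
    have "(\<integral>x. F i x \<partial>\<Omega>) = (\<integral>x. F i (\<lambda>u\<in>I. x (Transposition.transpose i j u)) \<partial>\<Omega>)"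
      using permutes_subset[OF \<tau> \<open>P \<subseteq> I\<close>] F_int[OF \<open>i \<in> P\<close>]
      by (intro integral_permute[symmetric]) auto
    also have "\<dots> = (\<integral>x. F j x \<partial>\<Omega>)"
      by (intro Bochner_Integration.integral_cong) (simp_all add: F_perm[OF \<tau>])
    finally show ?thesis by simp
  qed
  then have "(\<integral>x. (\<Sum>j\<in>P. F j x) \<partial>\<Omega>) = card P * (\<integral>x. F i x \<partial>\<Omega>)"
    by (simp add: integral_sum F_int)
  moreover have "card P \<noteq> 0"
    using assms(1,2) finite_units by (auto simp: finite_subset)
  ultimately show ?thesis by simp
qed

lemma integral_exchangeable_pair:
  fixes F :: "'i \<Rightarrow> 'i \<Rightarrow> ('i \<Rightarrow> 'b) \<Rightarrow> real"
  assumes "P \<subseteq> I" "i \<in> P" "i' \<in> P" "i \<noteq> i'"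
    and F_int: "\<And>j j'. j \<in> P \<Longrightarrow> j' \<in> P \<Longrightarrow> integrable \<Omega> (F j j')"
    and F_perm: "\<And>\<pi> x. \<pi> permutes P \<Longrightarrow> x \<in> space \<Omega> \<Longrightarrow>
                   F i i' (\<lambda>u\<in>I. x (\<pi> u)) = F (\<pi> i) (\<pi> i') x"
  shows "(\<integral>x. F i i' x \<partial>\<Omega>)
       = (\<integral>x. (\<Sum>j\<in>P. \<Sum>j'\<in>P - {j}. F j j' x) \<partial>\<Omega>) / (real (card P) * (real (card P) - 1))"
proof -
  have "(\<integral>x. F j j' x \<partial>\<Omega>) = (\<integral>x. F i i' x \<partial>\<Omega>)" if "j \<in> P" "j' \<in> P" "j \<noteq> j'" for j j'
  proof -
    define \<pi> where "\<pi> = Transposition.transpose j' (Transposition.transpose i j i') \<circ> Transposition.transpose i j"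
    have "Transposition.transpose i j i' \<in> P"
      using assms that by (auto simp: Transposition.transpose_def)
    then have \<pi>: "\<pi> permutes P"
      unfolding \<pi>_def using assms that by (intro permutes_compose permutes_swap_id)
    have "\<pi> i = j" "\<pi> i' = j'"
      using assms that by (auto simp: \<pi>_def Transposition.transpose_def)
    have "(\<integral>x. F i i' x \<partial>\<Omega>) = (\<integral>x. F i i' (\<lambda>u\<in>I. x (\<pi> u)) \<partial>\<Omega>)"
      using permutes_subset[OF \<pi> \<open>P \<subseteq> I\<close>] F_int[OF \<open>i \<in> P\<close> \<open>i' \<in> P\<close>]
      by (intro integral_permute[symmetric]) auto
    also have "\<dots> = (\<integral>x. F j j' x \<partial>\<Omega>)"
      by (intro Bochner_Integration.integral_cong) (simp_all add: F_perm[OF \<pi>] \<open>\<pi> i = j\<close> \<open>\<pi> i' = j'\<close>)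
    finally show ?thesis by simp
  qed
  note eq = this
  have "(\<integral>x. (\<Sum>j\<in>P. \<Sum>j'\<in>P - {j}. F j j' x) \<partial>\<Omega>)
      = (\<Sum>j\<in>P. \<Sum>j'\<in>P - {j}. \<integral>x. F j j' x \<partial>\<Omega>)"
    by (rule integral_double_sum) (auto intro: F_int)
  also have "\<dots> = (\<Sum>j\<in>P. \<Sum>j'\<in>P - {j}. \<integral>x. F i i' x \<partial>\<Omega>)"
    by (intro sum.cong refl) (auto simp: eq)
  moreover have "finite P" using assms(1) finite_units by (rule finite_subset)
  ultimately have "(\<integral>x. (\<Sum>j\<in>P. \<Sum>j'\<in>P - {j}. F j j' x) \<partial>\<Omega>)
      = card P * (card P - 1) * (\<integral>x. F i i' x \<partial>\<Omega>)"
    by (simp add: sum_offdiag_const)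
  moreover have "2 \<le> card P"
    using card_mono[of P "{i, i'}"] \<open>finite P\<close> assms(2-4) by auto
  ultimately show ?thesis by simp
qed

lemma integral_component:
  fixes f :: "'b \<Rightarrow> real"
  assumes "u \<in> I" and "f \<in> borel_measurable \<nu>"
  shows "(\<integral>x. f (x u) \<partial>\<Omega>) = (\<integral>y. f y \<partial>\<nu>)"
  using integral_distr[of "\<lambda>x. x u" \<Omega> \<nu> f] assms
  by (simp add: units.PiM_component)

lemma integral_mult_component:
  fixes f :: "'b \<Rightarrow> real" and H :: "('i \<Rightarrow> 'b) \<Rightarrow> real"
  assumes "j \<in> I" and H_int: "integrable \<Omega> H" and fH_int: "integrable \<Omega> (\<lambda>x. f (x j) * H x)"
    and H_indep: "\<And>x y. x \<in> space \<Omega> \<Longrightarrow> y \<in> space \<nu> \<Longrightarrow> H (x(j := y)) = H x"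
  shows "(\<integral>x. f (x j) * H x \<partial>\<Omega>) = (\<integral>y. f y \<partial>\<nu>) * (\<integral>x. H x \<partial>\<Omega>)"
proof -
  define J where "J = I - {j}"
  have I: "I = insert j J" "j \<notin> J" "finite J"
    using \<open>j \<in> I\<close> finite_units by (auto simp: J_def)
  obtain y0 where y0: "y0 \<in> space \<nu>" using not_empty by auto
  have H_J: "H (x(j := y)) = H (x(j := y0))" if "x \<in> space (PiM J (\<lambda>_. \<nu>))" "y \<in> space \<nu>" for x y
  proof -
    have "x(j := y0) \<in> space \<Omega>"
      using that y0 I by (auto simp: space_PiM PiE_def extensional_def Pi_def)
    from H_indep[OF this \<open>y \<in> space \<nu>\<close>] show ?thesis by simp
  qed
  have "(\<integral>x. f (x j) * H x \<partial>\<Omega>) = (\<integral>x. (\<integral>y. f y * H (x(j := y)) \<partial>\<nu>) \<partial>PiM J (\<lambda>_. \<nu>))"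
    using fH_int unfolding I(1) by (subst units.product_integral_insert) (use I in simp_all)
  also have "\<dots> = (\<integral>x. (\<integral>y. f y \<partial>\<nu>) * H (x(j := y0)) \<partial>PiM J (\<lambda>_. \<nu>))"
  proof (intro Bochner_Integration.integral_cong refl)
    fix x assume "x \<in> space (PiM J (\<lambda>_. \<nu>))"
    then have "(\<integral>y. f y * H (x(j := y)) \<partial>\<nu>) = (\<integral>y. f y * H (x(j := y0)) \<partial>\<nu>)"
      by (intro Bochner_Integration.integral_cong refl) (simp add: H_J)
    then show "(\<integral>y. f y * H (x(j := y)) \<partial>\<nu>) = (\<integral>y. f y \<partial>\<nu>) * H (x(j := y0))"
      by simp
  qed
  also have "\<dots> = (\<integral>y. f y \<partial>\<nu>) * (\<integral>x. (\<integral>y. H (x(j := y)) \<partial>\<nu>) \<partial>PiM J (\<lambda>_. \<nu>))"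
    by (simp add: H_J prob_space cong: Bochner_Integration.integral_cong)
  also have "(\<integral>x. (\<integral>y. H (x(j := y)) \<partial>\<nu>) \<partial>PiM J (\<lambda>_. \<nu>)) = (\<integral>x. H x \<partial>\<Omega>)"
    using H_int unfolding I(1) by (subst units.product_integral_insert) (use I in simp_all)
  finally show ?thesis .
qed

lemma integral_prod_components:
  fixes f :: "'b \<Rightarrow> real"
  assumes "P \<subseteq> I" and "integrable \<nu> f"
  shows "(\<integral>x. (\<Prod>u\<in>P. f (x u)) \<partial>\<Omega>) = (\<integral>y. f y \<partial>\<nu>) ^ card P"
proof -
  define F where "F u y = (if u \<in> P then f y else 1)" for u y
  have P: "{u \<in> I. u \<in> P} = P" using assms(1) by auto
  have "(\<Prod>u\<in>P. f (x u)) = (\<Prod>u\<in>I. F u (x u))" for x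
    unfolding F_def using finite_units by (subst prod.inter_filter[symmetric]) (simp_all add: P)
  then have "(\<integral>x. (\<Prod>u\<in>P. f (x u)) \<partial>\<Omega>) = (\<integral>x. (\<Prod>u\<in>I. F u (x u)) \<partial>\<Omega>)"
    by simp
  also have "\<dots> = (\<Prod>u\<in>I. \<integral>y. F u y \<partial>\<nu>)"
  proof (rule units.product_integral_prod[OF finite_units])
    show "integrable \<nu> (F u)" for u by (cases "u \<in> P") (simp_all add: F_def[abs_def] assms(2))
  qed
  also have "\<dots> = (\<Prod>u\<in>I. if u \<in> P then \<integral>y. f y \<partial>\<nu> else 1)"
    by (intro prod.cong refl) (simp add: F_def prob_space)
  also have "\<dots> = (\<integral>y. f y \<partial>\<nu>) ^ card P"
    using finite_units by (subst prod.inter_filter[symmetric]) (simp_all add: P)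
  finally show ?thesis .
qed

end

section \<open>Moments of one log-rank increment\<close>

locale logrank_stratum = iid_units \<nu> I for \<nu> :: "'b measure" and I :: "'i set" +
  fixes P A :: "'i set" and R T :: "'b \<Rightarrow> bool"
  assumes risk_set_units: "P \<subseteq> I" and event_set_risk_set: "A \<subseteq> P"
    and measurable_at_risk[measurable]: "Measurable.pred \<nu> R"
    and measurable_treated[measurable]: "Measurable.pred \<nu> T"
begin

lemma finite_risk_set [simp]: "finite P"
  using risk_set_units finite_units by (rule finite_subset)

lemma finite_event_set: "finite A"
  using event_set_risk_set finite_risk_set by (rule finite_subset)

lemma mem_risk_set_units [simp]: "u \<in> P \<Longrightarrow> u \<in> I"
  using risk_set_units by auto

lemma mem_event_set_risk_set [simp]: "u \<in> A \<Longrightarrow> u \<in> P"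
  using event_set_risk_set by auto

lemma measurable_statistics [measurable]:
  "u \<in> I \<Longrightarrow> (\<lambda>x. score P (R \<circ> x) (T \<circ> x) u) \<in> borel_measurable \<Omega>"
  "(\<lambda>x. logrank_increment P A (R \<circ> x) (T \<circ> x)) \<in> borel_measurable \<Omega>"
  "(\<lambda>x. treatment_variation P (R \<circ> x) (T \<circ> x)) \<in> borel_measurable \<Omega>"
  "(\<lambda>x. pair_weight P (R \<circ> x) (T \<circ> x)) \<in> borel_measurable \<Omega>"
  "(\<lambda>x. hypergeom_variance P A (R \<circ> x) (T \<circ> x)) \<in> borel_measurable \<Omega>"
  "(\<lambda>x. inverse_risk_count_excluding P (R \<circ> x) u v) \<in> borel_measurable \<Omega>"
  "(\<lambda>x. risk_count P (R \<circ> x)) \<in> borel_measurable \<Omega>"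
  unfolding score_def logrank_increment_def treatment_variation_def pair_weight_def
    hypergeom_variance_def inverse_risk_count_excluding_def treated_count_def risk_count_def o_def
  by measurable

lemma statistics_permute:
  assumes "\<pi> permutes P"
  shows "j \<in> P \<Longrightarrow> score P (R \<circ> (\<lambda>u\<in>I. x (\<pi> u))) (T \<circ> (\<lambda>u\<in>I. x (\<pi> u))) j
           = score P (R \<circ> x) (T \<circ> x) (\<pi> j)"
    and "pair_weight P (R \<circ> (\<lambda>u\<in>I. x (\<pi> u))) (T \<circ> (\<lambda>u\<in>I. x (\<pi> u)))
           = pair_weight P (R \<circ> x) (T \<circ> x)"
    and "(\<And>u. u \<in> A \<Longrightarrow> \<pi> u = u) \<Longrightarrow>
         logrank_increment P A (R \<circ> (\<lambda>u\<in>I. x (\<pi> u))) (T \<circ> (\<lambda>u\<in>I. x (\<pi> u)))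
           = logrank_increment P A (R \<circ> x) (T \<circ> x)"
  by (auto intro!: score_permute pair_weight_permute logrank_increment_permute assms
      simp: event_set_risk_set)

lemma integral_score:
  assumes "i \<in> P"
  shows "(\<integral>x. score P (R \<circ> x) (T \<circ> x) i \<partial>\<Omega>) = 0"
proof -
  have "(\<integral>x. score P (R \<circ> x) (T \<circ> x) i \<partial>\<Omega>)
      = (\<integral>x. (\<Sum>j\<in>P. score P (R \<circ> x) (T \<circ> x) j) \<partial>\<Omega>) / card P"
  proof (rule integral_exchangeable[OF risk_set_units assms])
    show "integrable \<Omega> (\<lambda>x. score P (R \<circ> x) (T \<circ> x) j)" if "j \<in> P" for j
      using that by (intro integrable_bounded[OF _ abs_score_le_1]) measurable
  qed (rule statistics_permute(1), assumption, rule assms)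
  also have "\<dots> = 0" by (simp add: sum_score_eq_0 finite_risk_set)
  finally show ?thesis .
qed

lemma integrable_score_mult:
  "u \<in> P \<Longrightarrow> v \<in> P \<Longrightarrow>
     integrable \<Omega> (\<lambda>x. score P (R \<circ> x) (T \<circ> x) u * score P (R \<circ> x) (T \<circ> x) v)"
  by (intro integrable_bounded[where B = 1])
    (measurable, simp add: abs_mult mult_le_one abs_score_le_1)

lemma integrable_score_sq: "u \<in> P \<Longrightarrow> integrable \<Omega> (\<lambda>x. (score P (R \<circ> x) (T \<circ> x) u)\<^sup>2)"
  using integrable_score_mult[of u u] by (simp add: power2_eq_square)

lemma integrable_logrank_increment: "integrable \<Omega> (\<lambda>x. logrank_increment P A (R \<circ> x) (T \<circ> x))"
  by (rule integrable_bounded[OF _ abs_logrank_increment_le]) measurable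

lemma integral_logrank_increment: "(\<integral>x. logrank_increment P A (R \<circ> x) (T \<circ> x) \<partial>\<Omega>) = 0"
  unfolding logrank_increment_def
  by (subst Bochner_Integration.integral_sum)
    (auto intro!: integrable_bounded[OF _ abs_score_le_1] simp: integral_score)

lemma integral_score_sq:
  assumes "i \<in> P"
  shows "(\<integral>x. (score P (R \<circ> x) (T \<circ> x) i)\<^sup>2 \<partial>\<Omega>)
       = (\<integral>x. treatment_variation P (R \<circ> x) (T \<circ> x) \<partial>\<Omega>) / card P"
proof -
  have "(\<integral>x. (score P (R \<circ> x) (T \<circ> x) i)\<^sup>2 \<partial>\<Omega>)
      = (\<integral>x. (\<Sum>j\<in>P. (score P (R \<circ> x) (T \<circ> x) j)\<^sup>2) \<partial>\<Omega>) / card P"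
    by (rule integral_exchangeable[OF risk_set_units assms])
      (simp_all only: integrable_score_sq statistics_permute assms)
  then show ?thesis by (simp add: sum_score_sq finite_risk_set)
qed

lemma integral_score_mult:
  assumes "i \<in> P" "i' \<in> P" "i \<noteq> i'"
  shows "(\<integral>x. score P (R \<circ> x) (T \<circ> x) i * score P (R \<circ> x) (T \<circ> x) i' \<partial>\<Omega>)
       = - (\<integral>x. treatment_variation P (R \<circ> x) (T \<circ> x) \<partial>\<Omega>) / (real (card P) * (real (card P) - 1))"
proof -
  have "(\<integral>x. score P (R \<circ> x) (T \<circ> x) i * score P (R \<circ> x) (T \<circ> x) i' \<partial>\<Omega>)
      = (\<integral>x. (\<Sum>j\<in>P. \<Sum>j'\<in>P - {j}. score P (R \<circ> x) (T \<circ> x) j * score P (R \<circ> x) (T \<circ> x) j') \<partial>\<Omega>)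
          / (real (card P) * (real (card P) - 1))"
    by (rule integral_exchangeable_pair[OF risk_set_units assms])
      (simp_all only: integrable_score_mult statistics_permute assms)
  then show ?thesis by (simp add: sum_score_offdiag finite_risk_set)
qed

lemma integrable_pair_weight:
  "u \<in> P \<Longrightarrow> v \<in> P \<Longrightarrow>
     integrable \<Omega> (\<lambda>x. of_bool (R (x u)) * of_bool (R (x v)) * pair_weight P (R \<circ> x) (T \<circ> x))"
  by (intro integrable_bounded[where B = 1])
    (measurable, simp add: abs_mult mult_le_one abs_pair_weight_le_1 finite_risk_set)

lemma integral_pair_weight:
  assumes "i \<in> P" "i' \<in> P" "i \<noteq> i'"
  shows "(\<integral>x. of_bool (R (x i)) * of_bool (R (x i')) * pair_weight P (R \<circ> x) (T \<circ> x) \<partial>\<Omega>)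
       = (\<integral>x. treatment_variation P (R \<circ> x) (T \<circ> x) \<partial>\<Omega>) / (real (card P) * (real (card P) - 1))"
proof -
  have "(\<integral>x. of_bool (R (x i)) * of_bool (R (x i')) * pair_weight P (R \<circ> x) (T \<circ> x) \<partial>\<Omega>)
      = (\<integral>x. (\<Sum>j\<in>P. \<Sum>j'\<in>P - {j}. of_bool (R (x j)) * of_bool (R (x j'))
            * pair_weight P (R \<circ> x) (T \<circ> x)) \<partial>\<Omega>) / (real (card P) * (real (card P) - 1))"
    by (rule integral_exchangeable_pair[OF risk_set_units assms])
      (simp_all only: integrable_pair_weight statistics_permute assms restrict_apply' mem_risk_set_units)
  then show ?thesis
    using sum_offdiag_pair_weight[OF finite_risk_set] by (simp add: comp_def)
qed

lemma treatment_variation_small_risk_set: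
  "card P \<le> 1 \<Longrightarrow> treatment_variation P (R \<circ> x) (T \<circ> x) = 0"
  using risk_count_le_card[of P "R \<circ> x"] by (intro treatment_variation_eq_0 finite_risk_set) simp

lemma integral_logrank_increment_sq:
  "(\<integral>x. (logrank_increment P A (R \<circ> x) (T \<circ> x))\<^sup>2 \<partial>\<Omega>)
     = real (card A) * (real (card P) - real (card A)) / (real (card P) * (real (card P) - 1))
       * (\<integral>x. treatment_variation P (R \<circ> x) (T \<circ> x) \<partial>\<Omega>)"
proof -
  let ?W = "\<integral>x. treatment_variation P (R \<circ> x) (T \<circ> x) \<partial>\<Omega>"
  have "(\<integral>x. (logrank_increment P A (R \<circ> x) (T \<circ> x))\<^sup>2 \<partial>\<Omega>)
      = (\<integral>x. (\<Sum>u\<in>A. (score P (R \<circ> x) (T \<circ> x) u)\<^sup>2) \<partial>\<Omega>)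
        + (\<integral>x. (\<Sum>u\<in>A. \<Sum>v\<in>A - {u}. score P (R \<circ> x) (T \<circ> x) u * score P (R \<circ> x) (T \<circ> x) v) \<partial>\<Omega>)"
    unfolding logrank_increment_sq[OF finite_event_set]
    by (rule Bochner_Integration.integral_add)
      (auto intro!: Bochner_Integration.integrable_sum integrable_score_sq integrable_score_mult)
  also have "\<dots> = (\<Sum>u\<in>A. \<integral>x. (score P (R \<circ> x) (T \<circ> x) u)\<^sup>2 \<partial>\<Omega>)
        + (\<Sum>u\<in>A. \<Sum>v\<in>A - {u}. \<integral>x. score P (R \<circ> x) (T \<circ> x) u * score P (R \<circ> x) (T \<circ> x) v \<partial>\<Omega>)"
  proof -
    have "(\<integral>x. (\<Sum>u\<in>A. \<Sum>v\<in>A - {u}. score P (R \<circ> x) (T \<circ> x) u * score P (R \<circ> x) (T \<circ> x) v) \<partial>\<Omega>)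
        = (\<Sum>u\<in>A. \<Sum>v\<in>A - {u}. \<integral>x. score P (R \<circ> x) (T \<circ> x) u * score P (R \<circ> x) (T \<circ> x) v \<partial>\<Omega>)"
      by (rule integral_double_sum) (rule integrable_score_mult; auto)
    then show ?thesis by (simp add: integrable_score_sq)
  qed
  also have "\<dots> = (\<Sum>u\<in>A. ?W / card P) + (\<Sum>u\<in>A. \<Sum>v\<in>A - {u}. - ?W / (real (card P) * (real (card P) - 1)))"
    by (intro arg_cong2[where f = "(+)"] sum.cong refl) (auto simp: integral_score_sq integral_score_mult)
  also have "\<dots> = card A * (?W / card P)
      + real (card A) * (real (card A) - 1) * (- ?W / (real (card P) * (real (card P) - 1)))"
    by (subst sum_offdiag_const[OF finite_event_set]) (simp only: sum_constant)
  also have "\<dots> = real (card A) * (real (card P) - real (card A)) / (real (card P) * (real (card P) - 1)) * ?W"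
  proof (cases "card P \<le> 1")
    case True
    then show ?thesis by (simp add: treatment_variation_small_risk_set)
  next
    case False
    then have "real (card P) \<noteq> 0" "real (card P) - 1 \<noteq> 0" by auto
    then show ?thesis by (simp add: field_simps)
  qed
  finally show ?thesis .
qed

lemma hypergeom_variance_eq_pairs:
  "hypergeom_variance P A (R \<circ> x) (T \<circ> x)
     = (\<Sum>u\<in>A. \<Sum>v\<in>P - A. of_bool (R (x u)) * of_bool (R (x v)) * pair_weight P (R \<circ> x) (T \<circ> x))"
  by (simp add: hypergeom_variance_eq_sum event_set_risk_set)

lemma integrable_hypergeom_variance: "integrable \<Omega> (\<lambda>x. hypergeom_variance P A (R \<circ> x) (T \<circ> x))"
  unfolding hypergeom_variance_eq_pairs
  by (intro Bochner_Integration.integrable_sum integrable_pair_weight) auto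

lemma integral_hypergeom_variance:
  "(\<integral>x. hypergeom_variance P A (R \<circ> x) (T \<circ> x) \<partial>\<Omega>)
     = real (card A) * (real (card P) - real (card A)) / (real (card P) * (real (card P) - 1))
       * (\<integral>x. treatment_variation P (R \<circ> x) (T \<circ> x) \<partial>\<Omega>)"
proof -
  have "(\<integral>x. hypergeom_variance P A (R \<circ> x) (T \<circ> x) \<partial>\<Omega>)
      = (\<Sum>u\<in>A. \<Sum>v\<in>P - A. \<integral>x. of_bool (R (x u)) * of_bool (R (x v)) * pair_weight P (R \<circ> x) (T \<circ> x) \<partial>\<Omega>)"
    unfolding hypergeom_variance_eq_pairs
    by (rule integral_double_sum) (rule integrable_pair_weight; auto)
  also have "\<dots> = (\<Sum>u\<in>A. \<Sum>v\<in>P - A. (\<integral>x. treatment_variation P (R \<circ> x) (T \<circ> x) \<partial>\<Omega>)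
      / (real (card P) * (real (card P) - 1)))"
    by (intro sum.cong refl integral_pair_weight) auto
  also have "\<dots> = real (card A) * (real (card P) - real (card A))
      * ((\<integral>x. treatment_variation P (R \<circ> x) (T \<circ> x) \<partial>\<Omega>) / (real (card P) * (real (card P) - 1)))"
    using finite_event_set card_mono[OF finite_risk_set event_set_risk_set]
    by (simp add: card_Diff_subset event_set_risk_set)
  finally show ?thesis by simp
qed

lemma integrable_logrank_increment_mult_score:
  assumes "logrank_stratum \<nu> I P' A' R' T" and "j \<in> P'"
  shows "integrable \<Omega> (\<lambda>x. logrank_increment P A (R \<circ> x) (T \<circ> x) * score P' (R' \<circ> x) (T \<circ> x) j)"
proof (rule integrable_bounded[where B = "card A"])
  interpret later: logrank_stratum \<nu> I P' A' R' T by fact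
  have "j \<in> I" using assms(2) by simp
  then show "(\<lambda>x. logrank_increment P A (R \<circ> x) (T \<circ> x) * score P' (R' \<circ> x) (T \<circ> x) j)
      \<in> borel_measurable \<Omega>"
    by measurable
  show "\<bar>logrank_increment P A (R \<circ> x) (T \<circ> x) * score P' (R' \<circ> x) (T \<circ> x) j\<bar> \<le> card A" for x
    using abs_logrank_increment_le[of P A "R \<circ> x" "T \<circ> x"] abs_score_le_1[of P' "R' \<circ> x" "T \<circ> x" j]
    unfolding abs_mult by (meson abs_ge_zero mult_left_le order_trans)
qed

(* The earlier increment is invariant under permutations of the later risk set. *)
lemma integral_logrank_increment_mult_score:
  assumes later: "logrank_stratum \<nu> I P' A' R' T" and "P' \<subseteq> P" and "A \<inter> P' = {}" and "i \<in> P'"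
  shows "(\<integral>x. logrank_increment P A (R \<circ> x) (T \<circ> x) * score P' (R' \<circ> x) (T \<circ> x) i \<partial>\<Omega>) = 0"
proof -
  interpret later: logrank_stratum \<nu> I P' A' R' T by (rule later)
  have "(\<integral>x. logrank_increment P A (R \<circ> x) (T \<circ> x) * score P' (R' \<circ> x) (T \<circ> x) i \<partial>\<Omega>)
      = (\<integral>x. (\<Sum>j\<in>P'. logrank_increment P A (R \<circ> x) (T \<circ> x) * score P' (R' \<circ> x) (T \<circ> x) j) \<partial>\<Omega>)
          / card P'"
  proof (rule integral_exchangeable[OF later.risk_set_units \<open>i \<in> P'\<close>
        integrable_logrank_increment_mult_score[OF later]])
    fix \<pi> x assume \<pi>: "\<pi> permutes P'"
    have "\<pi> permutes P" using \<pi> \<open>P' \<subseteq> P\<close> by (rule permutes_subset)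
    moreover have "\<pi> u = u" if "u \<in> A" for u
      using permutes_not_in[OF \<pi>] that \<open>A \<inter> P' = {}\<close> by auto
    ultimately show "logrank_increment P A (R \<circ> (\<lambda>u\<in>I. x (\<pi> u))) (T \<circ> (\<lambda>u\<in>I. x (\<pi> u)))
          * score P' (R' \<circ> (\<lambda>u\<in>I. x (\<pi> u))) (T \<circ> (\<lambda>u\<in>I. x (\<pi> u))) i
        = logrank_increment P A (R \<circ> x) (T \<circ> x) * score P' (R' \<circ> x) (T \<circ> x) (\<pi> i)"
      using \<pi> \<open>i \<in> P'\<close> by (simp only: statistics_permute later.statistics_permute)
  qed
  then show ?thesis
    by (simp add: later.finite_risk_set sum_score_eq_0 flip: sum_distrib_left)
qed

lemma integral_logrank_increment_mult:
  assumes later: "logrank_stratum \<nu> I P' A' R' T" and "P' \<subseteq> P" and "A \<inter> P' = {}"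
  shows "(\<integral>x. logrank_increment P A (R \<circ> x) (T \<circ> x) * logrank_increment P' A' (R' \<circ> x) (T \<circ> x) \<partial>\<Omega>) = 0"
proof -
  interpret later: logrank_stratum \<nu> I P' A' R' T by (rule later)
  have "(\<integral>x. logrank_increment P A (R \<circ> x) (T \<circ> x) * logrank_increment P' A' (R' \<circ> x) (T \<circ> x) \<partial>\<Omega>)
      = (\<Sum>i\<in>A'. \<integral>x. logrank_increment P A (R \<circ> x) (T \<circ> x) * score P' (R' \<circ> x) (T \<circ> x) i \<partial>\<Omega>)"
    unfolding logrank_increment_def[of P' A'] sum_distrib_left
    by (rule Bochner_Integration.integral_sum)
      (rule integrable_logrank_increment_mult_score[OF later]; simp)
  also have "\<dots> = 0"
    using assms by (simp add: integral_logrank_increment_mult_score)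
  finally show ?thesis .
qed

lemma integral_risk_count:
  "(\<integral>x. risk_count P (R \<circ> x) \<partial>\<Omega>) = card P * prob {b \<in> space \<nu>. R b}"
proof -
  have "(\<integral>x. risk_count P (R \<circ> x) \<partial>\<Omega>) = (\<Sum>u\<in>P. \<integral>x. of_bool (R (x u)) \<partial>\<Omega>)"
    unfolding risk_count_def comp_apply
    by (rule Bochner_Integration.integral_sum) (rule integrable_bounded[where B = 1]; simp)
  also have "\<dots> = (\<Sum>u\<in>P. prob {b \<in> space \<nu>. R b})"
    by (intro sum.cong refl)
      (subst integral_component[where f = "\<lambda>b. of_bool (R b)"]; simp add: integral_of_bool)
  finally show ?thesis by simp
qed

lemma integral_nobody_at_risk:
  "(\<integral>x. of_bool (\<forall>u\<in>P. \<not> R (x u)) \<partial>\<Omega>) = (1 - prob {b \<in> space \<nu>. R b}) ^ card P"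
proof -
  have "prob {b \<in> space \<nu>. \<not> R b} = prob (space \<nu> - {b \<in> space \<nu>. R b})"
    by (rule arg_cong[where f = prob]) auto
  also have "\<dots> = 1 - prob {b \<in> space \<nu>. R b}"
    by (rule prob_compl) measurable
  finally have compl: "prob {b \<in> space \<nu>. \<not> R b} = 1 - prob {b \<in> space \<nu>. R b}" .
  have "integrable \<nu> (\<lambda>b. of_bool (\<not> R b) :: real)"
    by (rule integrable_const_bound[where B = 1]) (simp, measurable)
  then show ?thesis
    unfolding of_bool_Ball_eq_prod[OF finite_risk_set]
    by (subst integral_prod_components[where f = "\<lambda>b. of_bool (\<not> R b)"])
      (simp_all add: risk_set_units integral_of_bool compl)
qed

lemma integral_pair_inverse_risk_count:
  assumes "u \<in> P" "v \<in> P" "u \<noteq> v"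
    and [measurable]: "Measurable.pred \<nu> F" "Measurable.pred \<nu> G"
  shows "(\<integral>x. of_bool (F (x u)) * of_bool (G (x v)) * inverse_risk_count_excluding P (R \<circ> x) u v \<partial>\<Omega>)
       = prob {b \<in> space \<nu>. F b} * prob {b \<in> space \<nu>. G b}
         * (\<integral>x. inverse_risk_count_excluding P (R \<circ> x) u v \<partial>\<Omega>)"
proof -
  let ?H = "\<lambda>x. inverse_risk_count_excluding P (R \<circ> x) u v"
  have H_indep: "?H (x(w := y)) = ?H x" if "w \<in> {u, v}" for x y w
    using that by (intro inverse_risk_count_excluding_cong) auto
  have H_bound: "\<bar>?H x\<bar> \<le> 1" for x
    by (rule abs_inverse_risk_count_excluding_le_1)
  have int_GH: "integrable \<Omega> (\<lambda>x. of_bool (G (x v)) * ?H x)"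
    using assms(2) by (intro integrable_bounded[where B = 1]) (measurable, simp add: H_bound)
  have "(\<integral>x. of_bool (F (x u)) * (of_bool (G (x v)) * ?H x) \<partial>\<Omega>)
      = (\<integral>b. of_bool (F b) \<partial>\<nu>) * (\<integral>x. of_bool (G (x v)) * ?H x \<partial>\<Omega>)"
  proof (rule integral_mult_component)
    show "integrable \<Omega> (\<lambda>x. of_bool (F (x u)) * (of_bool (G (x v)) * ?H x))"
      using assms(1,2) by (intro integrable_bounded[where B = 1]) (measurable, simp add: H_bound)
  qed (use assms int_GH H_indep in auto)
  also have "(\<integral>x. of_bool (G (x v)) * ?H x \<partial>\<Omega>) = (\<integral>b. of_bool (G b) \<partial>\<nu>) * (\<integral>x. ?H x \<partial>\<Omega>)"
  proof (rule integral_mult_component)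
    show "integrable \<Omega> ?H" by (intro integrable_bounded[where B = 1]) (measurable, simp add: H_bound)
  qed (use assms int_GH H_indep in auto)
  finally show ?thesis by (simp add: integral_of_bool mult.assoc comp_def)
qed

lemma integrable_pair_inverse_risk_count:
  assumes [measurable]: "Measurable.pred \<nu> F" "Measurable.pred \<nu> G" and "u \<in> P" "v \<in> P"
  shows "integrable \<Omega> (\<lambda>x. of_bool (F (x u)) * of_bool (G (x v)) * inverse_risk_count_excluding P (R \<circ> x) u v)"
  using assms(3,4) by (intro integrable_bounded[where B = 1])
    (measurable, simp add: abs_mult mult_le_one abs_inverse_risk_count_excluding_le_1)

lemma integral_treatment_variation_eq_sum_pairs:
  "(\<integral>x. treatment_variation P (R \<circ> x) (T \<circ> x) \<partial>\<Omega>)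
     = (\<Sum>u\<in>P. \<Sum>v\<in>P - {u}. \<integral>x. of_bool (R (x u) \<and> T (x u)) * of_bool (R (x v) \<and> \<not> T (x v))
          * inverse_risk_count_excluding P (R \<circ> x) u v \<partial>\<Omega>)"
  unfolding treatment_variation_eq_sum_pairs[OF finite_risk_set]
  by (simp only: comp_apply) (rule integral_double_sum, rule integrable_pair_inverse_risk_count; simp)

lemma integral_risk_count_eq_sum_pairs:
  "card P * prob {b \<in> space \<nu>. R b} - 1 + (1 - prob {b \<in> space \<nu>. R b}) ^ card P
     = (\<Sum>u\<in>P. \<Sum>v\<in>P - {u}. \<integral>x. of_bool (R (x u)) * of_bool (R (x v))
          * inverse_risk_count_excluding P (R \<circ> x) u v \<partial>\<Omega>)"
proof -
  have "integrable \<Omega> (\<lambda>x. risk_count P (R \<circ> x))"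
    by (intro integrable_bounded[where B = "card P"])
      (measurable, simp add: abs_of_nonneg risk_count_nonneg risk_count_le_card)
  moreover have "integrable \<Omega> (\<lambda>x. of_bool (\<forall>u\<in>P. \<not> R (x u)) :: real)"
  proof (rule integrable_bounded[where B = 1])
    show "(\<lambda>x. of_bool (\<forall>u\<in>P. \<not> R (x u)) :: real) \<in> borel_measurable \<Omega>"
      unfolding of_bool_Ball_eq_prod[OF finite_risk_set] by measurable
  qed simp
  ultimately have "card P * prob {b \<in> space \<nu>. R b} - 1 + (1 - prob {b \<in> space \<nu>. R b}) ^ card P
      = (\<integral>x. risk_count P (R \<circ> x) - 1 + of_bool (\<forall>u\<in>P. \<not> R (x u)) \<partial>\<Omega>)"
    by (simp add: integral_risk_count integral_nobody_at_risk units.P.prob_space)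
  also have "(\<lambda>x. risk_count P (R \<circ> x) - 1 + of_bool (\<forall>u\<in>P. \<not> R (x u)))
      = (\<lambda>x. \<Sum>u\<in>P. \<Sum>v\<in>P - {u}. of_bool (R (x u)) * of_bool (R (x v))
          * inverse_risk_count_excluding P (R \<circ> x) u v)"
    using risk_count_eq_sum_pairs[OF finite_risk_set] by (simp add: comp_def)
  finally show ?thesis
    by (simp only:) (rule integral_double_sum, rule integrable_pair_inverse_risk_count; simp)
qed

lemma integral_treatment_variation:
  fixes g \<phi> :: real
  defines "g \<equiv> prob {b \<in> space \<nu>. R b}"
    and "\<phi> \<equiv> prob {b \<in> space \<nu>. R b \<and> T b} / prob {b \<in> space \<nu>. R b}"
  shows "(\<integral>x. treatment_variation P (R \<circ> x) (T \<circ> x) \<partial>\<Omega>)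
       = \<phi> * (1 - \<phi>) * (card P * g - 1 + (1 - g) ^ card P)"
proof -
  define a where "a = prob {b \<in> space \<nu>. R b \<and> T b}"
  define \<kappa> where "\<kappa> = (\<Sum>u\<in>P. \<Sum>v\<in>P - {u}. \<integral>x. inverse_risk_count_excluding P (R \<circ> x) u v \<partial>\<Omega>)"
  have "prob {b \<in> space \<nu>. R b \<and> \<not> T b} = prob ({b \<in> space \<nu>. R b} - {b \<in> space \<nu>. R b \<and> T b})"
    by (rule arg_cong[where f = prob]) auto
  also have "\<dots> = g - a"
    unfolding g_def a_def by (rule finite_measure_Diff) (measurable, auto)
  finally have untreated: "prob {b \<in> space \<nu>. R b \<and> \<not> T b} = g - a" .
  have W: "(\<integral>x. treatment_variation P (R \<circ> x) (T \<circ> x) \<partial>\<Omega>) = a * (g - a) * \<kappa>"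
    unfolding integral_treatment_variation_eq_sum_pairs \<kappa>_def sum_distrib_left
    by (intro sum.cong refl, subst integral_pair_inverse_risk_count)
      (auto simp: untreated a_def)
  have N: "card P * g - 1 + (1 - g) ^ card P = g * g * \<kappa>"
    unfolding g_def integral_risk_count_eq_sum_pairs \<kappa>_def sum_distrib_left
    by (intro sum.cong refl integral_pair_inverse_risk_count) auto
  show ?thesis
  proof (cases "g = 0")
    case True
    have "a \<le> g" unfolding a_def g_def by (rule finite_measure_mono) (auto, measurable)
    then have "a = 0" using True measure_nonneg[of \<nu>] by (simp add: a_def order.antisym)
    then show ?thesis using W True by (simp add: \<phi>_def flip: a_def g_def)
  next
    case False
    have "\<phi> = a / g" by (simp add: \<phi>_def a_def g_def)
    then have "\<phi> * (1 - \<phi>) * (g * g * \<kappa>) = a * (g - a) * \<kappa>"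
      using False by (simp add: field_simps)
    then show ?thesis unfolding W N by (rule sym)
  qed
qed

lemma integral_hypergeom_variance_eq:
  fixes g \<phi> h :: real
  defines "g \<equiv> prob {b \<in> space \<nu>. R b}"
    and "\<phi> \<equiv> prob {b \<in> space \<nu>. R b \<and> T b} / prob {b \<in> space \<nu>. R b}"
    and "h \<equiv> card A / card P"
  shows "(\<integral>x. hypergeom_variance P A (R \<circ> x) (T \<circ> x) \<partial>\<Omega>)
       = (real (card P))\<^sup>2 / (real (card P) - 1) * h * (1 - h) * \<phi> * (1 - \<phi>)
         * (g - (1 - (1 - g) ^ card P) / real (card P))"
  unfolding integral_hypergeom_variance integral_treatment_variation h_def g_def \<phi>_def
  by (rule hypergeom_factor_rearrange)

end

context iid_units
begin

lemma integral_sum_logrank_increments: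
  assumes "\<And>s. s \<in> S \<Longrightarrow> logrank_stratum \<nu> I (P s) (A s) (R s) T"
  shows "(\<integral>x. (\<Sum>s\<in>S. logrank_increment (P s) (A s) (R s \<circ> x) (T \<circ> x)) \<partial>\<Omega>) = 0"
  using assms
  by (simp add: Bochner_Integration.integral_sum logrank_stratum.integral_logrank_increment
      logrank_stratum.integrable_logrank_increment)

lemma integral_sq_sum_logrank_increments:
  fixes S :: "'a::linorder set" and P A :: "'a \<Rightarrow> 'i set" and R :: "'a \<Rightarrow> 'b \<Rightarrow> bool"
  assumes "finite S"
    and strata: "\<And>s. s \<in> S \<Longrightarrow> logrank_stratum \<nu> I (P s) (A s) (R s) T"
    and nested: "\<And>s s'. s \<in> S \<Longrightarrow> s' \<in> S \<Longrightarrow> s < s' \<Longrightarrow> P s' \<subseteq> P s \<and> A s \<inter> P s' = {}"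
  shows "(\<integral>x. (\<Sum>s\<in>S. logrank_increment (P s) (A s) (R s \<circ> x) (T \<circ> x))\<^sup>2 \<partial>\<Omega>)
       = (\<Sum>s\<in>S. \<integral>x. hypergeom_variance (P s) (A s) (R s \<circ> x) (T \<circ> x) \<partial>\<Omega>)"
proof -
  let ?X = "\<lambda>s x. logrank_increment (P s) (A s) (R s \<circ> x) (T \<circ> x)"
  have int: "integrable \<Omega> (\<lambda>x. ?X s x * ?X s' x)" if "s \<in> S" "s' \<in> S" for s s'
  proof (rule integrable_bounded[where B = "real (card (A s)) * real (card (A s'))"])
    interpret S: logrank_stratum \<nu> I "P s" "A s" "R s" T using strata \<open>s \<in> S\<close> .
    interpret S': logrank_stratum \<nu> I "P s'" "A s'" "R s'" T using strata \<open>s' \<in> S\<close> .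
    show "(\<lambda>x. ?X s x * ?X s' x) \<in> borel_measurable \<Omega>" by measurable
    show "\<bar>?X s x * ?X s' x\<bar> \<le> real (card (A s)) * real (card (A s'))" for x
      unfolding abs_mult by (intro mult_mono abs_logrank_increment_le) auto
  qed
  have cross: "(\<integral>x. ?X s x * ?X s' x \<partial>\<Omega>) = 0" if "s \<in> S" "s' \<in> S" "s \<noteq> s'" for s s'
  proof (cases "s < s'")
    case True
    then show ?thesis using nested[OF that(1,2)] that
      by (intro logrank_stratum.integral_logrank_increment_mult strata) auto
  next
    case False
    then have "s' < s" using that(3) by simp
    then have "(\<integral>x. ?X s' x * ?X s x \<partial>\<Omega>) = 0" using nested[OF that(2,1)] that
      by (intro logrank_stratum.integral_logrank_increment_mult strata) auto
    then show ?thesis by (simp only: mult.commute)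
  qed
  have "(\<integral>x. (\<Sum>s\<in>S. ?X s x)\<^sup>2 \<partial>\<Omega>) = (\<Sum>s\<in>S. \<Sum>s'\<in>S. \<integral>x. ?X s x * ?X s' x \<partial>\<Omega>)"
    unfolding power2_eq_square sum_product by (rule integral_double_sum) (rule int)
  also have "\<dots> = (\<Sum>s\<in>S. \<integral>x. (?X s x)\<^sup>2 \<partial>\<Omega>)"
    using \<open>finite S\<close>
    by (intro sum.cong refl, subst sum.remove) (auto simp: power2_eq_square intro!: sum.neutral cross)
  also have "\<dots> = (\<Sum>s\<in>S. \<integral>x. hypergeom_variance (P s) (A s) (R s \<circ> x) (T \<circ> x) \<partial>\<Omega>)"
    using strata
    by (intro sum.cong refl)
      (simp add: logrank_stratum.integral_logrank_increment_sq logrank_stratum.integral_hypergeom_variance)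
  finally show ?thesis .
qed

end

section \<open>The log-rank statistic under the null hypothesis\<close>

(* The data of one unit is (Z_i, C_i(1), C_i(0)); its realised censoring time is C_i(Z_i). *)
definition censoring_time :: "bool \<times> ennreal \<times> ennreal \<Rightarrow> ennreal" where
  "censoring_time b = (if fst b then fst (snd b) else snd (snd b))"

definition uncensored_at :: "real \<Rightarrow> bool \<times> ennreal \<times> ennreal \<Rightarrow> bool" where
  "uncensored_at s b \<longleftrightarrow> ennreal s \<le> censoring_time b"

definition risk_set :: "nat \<Rightarrow> (nat \<Rightarrow> real) \<Rightarrow> real \<Rightarrow> nat set" where
  "risk_set n t0 s = {i \<in> {..<n}. s \<le> t0 i}"

definition event_set :: "nat \<Rightarrow> (nat \<Rightarrow> real) \<Rightarrow> real \<Rightarrow> nat set" where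
  "event_set n t0 s = {i \<in> {..<n}. t0 i = s}"

lemma measurable_uncensored_at [measurable]:
  "Measurable.pred (count_space UNIV \<Otimes>\<^sub>M (borel :: (ennreal \<times> ennreal) measure)) (uncensored_at s)"
proof -
  have [measurable]: "fst \<in> borel_measurable (borel :: (ennreal \<times> ennreal) measure)"
    "snd \<in> borel_measurable (borel :: (ennreal \<times> ennreal) measure)"
    by (simp_all flip: borel_prod)
  show ?thesis unfolding uncensored_at_def censoring_time_def by measurable
qed

context
  fixes n :: nat and t1 t0 :: "nat \<Rightarrow> real" and z :: "nat \<Rightarrow> bool" and c1 c0 :: "nat \<Rightarrow> ennreal"
    and x :: "nat \<Rightarrow> bool \<times> ennreal \<times> ennreal"
  assumes t0_nonneg: "\<And>i. i < n \<Longrightarrow> 0 \<le> t0 i" and null: "\<And>i. i < n \<Longrightarrow> t1 i = t0 i"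
    and unit_data: "\<And>i. i < n \<Longrightarrow> x i = (z i, c1 i, c0 i)"
begin

lemma observed_at_risk_iff:
  "i < n \<Longrightarrow> ennreal s \<le> obsW t1 t0 c1 c0 z i \<longleftrightarrow> i \<in> risk_set n t0 s \<and> uncensored_at s (x i)"
  using t0_nonneg[of i] null[of i] unit_data[of i]
  by (auto simp: obsW_def realT_def realC_def risk_set_def uncensored_at_def censoring_time_def)

lemma observed_event_iff:
  "0 \<le> s \<Longrightarrow> i < n \<Longrightarrow> obsDelta t1 t0 c1 c0 z i \<and> obsW t1 t0 c1 c0 z i = ennreal s
     \<longleftrightarrow> i \<in> event_set n t0 s \<and> uncensored_at s (x i)"
  using t0_nonneg[of i] null[of i] unit_data[of i]
  by (auto simp: obsW_def obsDelta_def realT_def realC_def event_set_def uncensored_at_def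
      censoring_time_def min_def)

lemma N1_eq: "N1 n t1 t0 c1 c0 z s = treated_count (risk_set n t0 s) (uncensored_at s \<circ> x) (fst \<circ> x)"
proof -
  have "{i \<in> {..<n}. z i \<and> ennreal s \<le> obsW t1 t0 c1 c0 z i}
      = risk_set n t0 s \<inter> {i. uncensored_at s (x i) \<and> fst (x i)}"
    using observed_at_risk_iff unit_data by (auto simp: risk_set_def)
  then show ?thesis by (simp add: N1_def treated_count_def risk_set_def)
qed

lemma N0_eq:
  "N0 n t1 t0 c1 c0 z s = treated_count (risk_set n t0 s) (uncensored_at s \<circ> x) (\<lambda>i. \<not> fst (x i))"
proof -
  have "{i \<in> {..<n}. \<not> z i \<and> ennreal s \<le> obsW t1 t0 c1 c0 z i}
      = risk_set n t0 s \<inter> {i. uncensored_at s (x i) \<and> \<not> fst (x i)}"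
    using observed_at_risk_iff unit_data by (auto simp: risk_set_def)
  then show ?thesis by (simp add: N0_def treated_count_def risk_set_def)
qed

lemma Ntot_eq: "Ntot n t1 t0 c1 c0 z s = risk_count (risk_set n t0 s) (uncensored_at s \<circ> x)"
  using risk_count_minus_treated_count[of "risk_set n t0 s" "uncensored_at s \<circ> x" "fst \<circ> x"]
  by (simp add: Ntot_def N1_eq N0_eq)

lemma D1_eq: "0 \<le> s \<Longrightarrow> D1 n t1 t0 c1 c0 z s = treated_count (event_set n t0 s) (uncensored_at s \<circ> x) (fst \<circ> x)"
proof -
  assume "0 \<le> s"
  have "i < n \<and> z i \<and> (obsDelta t1 t0 c1 c0 z i \<and> obsW t1 t0 c1 c0 z i = ennreal s)
      \<longleftrightarrow> i \<in> event_set n t0 s \<and> uncensored_at s (x i) \<and> fst (x i)" for i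
    using observed_event_iff[OF \<open>0 \<le> s\<close>, of i] unit_data[of i] by (cases "i < n") (auto simp: event_set_def)
  then have "{i \<in> {..<n}. z i \<and> obsDelta t1 t0 c1 c0 z i \<and> obsW t1 t0 c1 c0 z i = ennreal s}
      = event_set n t0 s \<inter> {i. uncensored_at s (x i) \<and> fst (x i)}"
    by blast
  then show ?thesis by (simp add: D1_def treated_count_def event_set_def)
qed

lemma Dtot_eq: "0 \<le> s \<Longrightarrow> Dtot n t1 t0 c1 c0 z s = risk_count (event_set n t0 s) (uncensored_at s \<circ> x)"
proof -
  assume "0 \<le> s"
  have "{i \<in> {..<n}. obsDelta t1 t0 c1 c0 z i \<and> obsW t1 t0 c1 c0 z i = ennreal s}
      = event_set n t0 s \<inter> {i. uncensored_at s (x i)}"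
    using observed_event_iff[OF \<open>0 \<le> s\<close>] by (auto simp: event_set_def)
  then show ?thesis by (simp add: Dtot_def risk_count_def event_set_def)
qed

lemma observed_minus_expected_eq:
  "0 \<le> s \<Longrightarrow> D1 n t1 t0 c1 c0 z s - Mk n t1 t0 c1 c0 z s
     = logrank_increment (risk_set n t0 s) (event_set n t0 s) (uncensored_at s \<circ> x) (fst \<circ> x)"
  by (simp add: logrank_increment_eq Mk_def D1_eq Dtot_eq N1_eq Ntot_eq)

lemma Vk_eq:
  "0 \<le> s \<Longrightarrow> Vk n t1 t0 c1 c0 z s
     = hypergeom_variance (risk_set n t0 s) (event_set n t0 s) (uncensored_at s \<circ> x) (fst \<circ> x)"
  using risk_count_minus_treated_count[of "risk_set n t0 s" "uncensored_at s \<circ> x" "fst \<circ> x"]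
  by (simp add: Vk_def Let_def hypergeom_variance_def pair_weight_def treatment_variation_def
      Dtot_eq Ntot_eq N1_eq N0_eq power2_eq_square divide_divide_eq_left mult.assoc)

lemma times0_nonneg: "s \<in> times0 n t0 \<Longrightarrow> 0 \<le> s"
  using t0_nonneg by (auto simp: times0_def)

lemma logrankL_eq:
  "logrankL n t1 t0 c1 c0 z = (\<Sum>s\<in>times0 n t0.
     logrank_increment (risk_set n t0 s) (event_set n t0 s) (uncensored_at s \<circ> x) (fst \<circ> x))"
  unfolding logrankL_def by (intro sum.cong refl observed_minus_expected_eq times0_nonneg)

lemma logrankU_eq:
  "logrankU n t1 t0 c1 c0 z = (\<Sum>s\<in>times0 n t0.
     hypergeom_variance (risk_set n t0 s) (event_set n t0 s) (uncensored_at s \<circ> x) (fst \<circ> x))"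
  unfolding logrankU_def by (intro sum.cong refl Vk_eq times0_nonneg)

end

lemma integral_bernoulli_pair:
  fixes f :: "bool \<times> 'c \<Rightarrow> real"
  assumes Q: "prob_space Q" and p: "0 \<le> p" "p \<le> 1"
    and f: "integrable (measure_pmf (bernoulli_pmf p) \<Otimes>\<^sub>M Q) f"
  shows "(\<integral>b. f b \<partial>(measure_pmf (bernoulli_pmf p) \<Otimes>\<^sub>M Q))
       = p * (\<integral>c. f (True, c) \<partial>Q) + (1 - p) * (\<integral>c. f (False, c) \<partial>Q)"
proof -
  interpret pair_prob_space "measure_pmf (bernoulli_pmf p)" Q
    by (intro pair_prob_space.intro pair_sigma_finite.intro prob_space_imp_sigma_finite
        prob_space_measure_pmf Q)
  have "(\<integral>b. f b \<partial>(measure_pmf (bernoulli_pmf p) \<Otimes>\<^sub>M Q))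
      = (\<integral>z. (\<integral>c. f (z, c) \<partial>Q) \<partial>measure_pmf (bernoulli_pmf p))"
    by (rule integral_fst'[OF f, symmetric])
  also have "\<dots> = (\<Sum>z\<in>UNIV. pmf (bernoulli_pmf p) z *\<^sub>R (\<integral>c. f (z, c) \<partial>Q))"
    by (rule integral_measure_pmf) auto
  finally show ?thesis using p by (simp add: UNIV_bool)
qed


lemma measure_uncensored_at:
  fixes Q :: "(ennreal \<times> ennreal) measure"
  assumes Q: "prob_space Q" "sets Q = sets (borel :: (ennreal \<times> ennreal) measure)"
    and p: "0 \<le> p" "p \<le> 1"
  defines "\<nu> \<equiv> measure_pmf (bernoulli_pmf p) \<Otimes>\<^sub>M Q"
  shows "measure \<nu> {b \<in> space \<nu>. uncensored_at s b} = Gmix p Q s"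
    and "measure \<nu> {b \<in> space \<nu>. uncensored_at s b \<and> fst b} = p * Gsurv1 Q s"
proof -
  have sets_\<nu>: "sets \<nu> = sets (count_space UNIV \<Otimes>\<^sub>M (borel :: (ennreal \<times> ennreal) measure))"
    unfolding \<nu>_def by (intro sets_pair_measure_cong Q) simp
  interpret \<nu>: prob_space \<nu>
    unfolding \<nu>_def by (intro prob_space_pair prob_space_measure_pmf Q)
  have int: "integrable \<nu> (\<lambda>b. of_bool (F b) :: real)"
    if "Measurable.pred (count_space UNIV \<Otimes>\<^sub>M (borel :: (ennreal \<times> ennreal) measure)) F" for F
    using that by (intro \<nu>.integrable_const_bound[where B = 1]) (simp_all add: measurable_cong_sets[OF sets_\<nu>])
  have [measurable]: "Measurable.pred (count_space UNIV \<Otimes>\<^sub>M borel) (\<lambda>b. uncensored_at s b \<and> fst b)"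
    by measurable
  have "measure \<nu> {b \<in> space \<nu>. uncensored_at s b} = (\<integral>b. of_bool (uncensored_at s b) \<partial>\<nu>)"
    by (simp add: integral_of_bool)
  also have "\<dots> = p * (\<integral>c. of_bool (uncensored_at s (True, c)) \<partial>Q)
      + (1 - p) * (\<integral>c. of_bool (uncensored_at s (False, c)) \<partial>Q)"
    using int[of "uncensored_at s"] unfolding \<nu>_def by (simp add: integral_bernoulli_pair[OF Q(1) p])
  finally show "measure \<nu> {b \<in> space \<nu>. uncensored_at s b} = Gmix p Q s"
    by (simp add: integral_of_bool Gmix_def Gsurv1_def Gsurv0_def uncensored_at_def censoring_time_def)
  have "measure \<nu> {b \<in> space \<nu>. uncensored_at s b \<and> fst b} = (\<integral>b. of_bool (uncensored_at s b \<and> fst b) \<partial>\<nu>)"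
    by (simp add: integral_of_bool)
  also have "\<dots> = p * (\<integral>c. of_bool (uncensored_at s (True, c)) \<partial>Q)"
    using int[of "\<lambda>b. uncensored_at s b \<and> fst b"] unfolding \<nu>_def
    by (simp add: integral_bernoulli_pair[OF Q(1) p])
  finally show "measure \<nu> {b \<in> space \<nu>. uncensored_at s b \<and> fst b} = p * Gsurv1 Q s"
    by (simp add: integral_of_bool Gsurv1_def uncensored_at_def censoring_time_def)
qed

lemma risk_sets_nested:
  "s < s' \<Longrightarrow> risk_set n t0 s' \<subseteq> risk_set n t0 s \<and> event_set n t0 s \<inter> risk_set n t0 s' = {}"
  by (auto simp: risk_set_def event_set_def)

lemma logrank_stratum_uncensored_at:
  fixes Q :: "(ennreal \<times> ennreal) measure"
  assumes "prob_space Q" "sets Q = sets (borel :: (ennreal \<times> ennreal) measure)" "0 \<le> p" "p \<le> 1"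
  shows "logrank_stratum (measure_pmf (bernoulli_pmf p) \<Otimes>\<^sub>M Q) {..<n}
           (risk_set n t0 s) (event_set n t0 s) (uncensored_at s) fst"
proof -
  have sets: "sets (measure_pmf (bernoulli_pmf p) \<Otimes>\<^sub>M Q)
      = sets (count_space UNIV \<Otimes>\<^sub>M (borel :: (ennreal \<times> ennreal) measure))"
    by (intro sets_pair_measure_cong assms) simp
  show ?thesis
  proof (intro logrank_stratum.intro iid_units.intro logrank_stratum_axioms.intro iid_units_axioms.intro)
    show "prob_space (measure_pmf (bernoulli_pmf p) \<Otimes>\<^sub>M Q)"
      by (intro prob_space_pair prob_space_measure_pmf assms)
  qed (auto simp: risk_set_def event_set_def measurable_cong_sets[OF sets refl])
qed

lemma integral_unit_data:
  fixes M :: "'a measure" and F :: "(nat \<Rightarrow> bool \<times> ennreal \<times> ennreal) \<Rightarrow> real"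
    and Q :: "(ennreal \<times> ennreal) measure"
  assumes "sets Q = sets (borel :: (ennreal \<times> ennreal) measure)"
    and "\<And>i. i < n \<Longrightarrow> Z i \<in> measurable M (count_space UNIV)"
    and "\<And>i. i < n \<Longrightarrow> (\<lambda>\<omega>. (C1 i \<omega>, C0 i \<omega>)) \<in> borel_measurable M"
    and joint: "distr M (PiM {..<n} (\<lambda>_. count_space UNIV \<Otimes>\<^sub>M (borel :: (ennreal \<times> ennreal) measure)))
                  (\<lambda>\<omega>. \<lambda>i\<in>{..<n}. (Z i \<omega>, (C1 i \<omega>, C0 i \<omega>)))
               = PiM {..<n} (\<lambda>_. measure_pmf (bernoulli_pmf p) \<Otimes>\<^sub>M Q)"
    and F: "F \<in> borel_measurable (PiM {..<n} (\<lambda>_. measure_pmf (bernoulli_pmf p) \<Otimes>\<^sub>M Q))"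
  shows "(\<integral>\<omega>. F (\<lambda>i\<in>{..<n}. (Z i \<omega>, C1 i \<omega>, C0 i \<omega>)) \<partial>M)
       = (\<integral>x. F x \<partial>PiM {..<n} (\<lambda>_. measure_pmf (bernoulli_pmf p) \<Otimes>\<^sub>M Q))"
proof -
  let ?N = "PiM {..<n} (\<lambda>_. count_space UNIV \<Otimes>\<^sub>M (borel :: (ennreal \<times> ennreal) measure))"
  have sets: "sets (PiM {..<n} (\<lambda>_. measure_pmf (bernoulli_pmf p) \<Otimes>\<^sub>M Q)) = sets ?N"
    by (intro sets_PiM_cong sets_pair_measure_cong assms) simp_all
  have "F \<in> borel_measurable ?N"
    using F unfolding measurable_cong_sets[OF sets refl] .
  moreover have "(\<lambda>\<omega>. \<lambda>i\<in>{..<n}. (Z i \<omega>, C1 i \<omega>, C0 i \<omega>)) \<in> measurable M ?N"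
    by (intro measurable_restrict measurable_Pair assms) auto
  ultimately have "(\<integral>\<omega>. F (\<lambda>i\<in>{..<n}. (Z i \<omega>, C1 i \<omega>, C0 i \<omega>)) \<partial>M)
      = integral\<^sup>L (distr M ?N (\<lambda>\<omega>. \<lambda>i\<in>{..<n}. (Z i \<omega>, C1 i \<omega>, C0 i \<omega>))) F"
    by (simp add: integral_distr)
  then show ?thesis by (simp only: joint)
qed

lemma integral_hypergeom_variance_uncensored_at:
  fixes Q :: "(ennreal \<times> ennreal) measure"
  assumes "prob_space Q" "sets Q = sets (borel :: (ennreal \<times> ennreal) measure)" "0 \<le> p" "p \<le> 1"
  shows "(\<integral>x. hypergeom_variance (risk_set n t0 s) (event_set n t0 s) (uncensored_at s \<circ> x) (fst \<circ> x)
            \<partial>PiM {..<n} (\<lambda>_. measure_pmf (bernoulli_pmf p) \<Otimes>\<^sub>M Q))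
       = (real (nk n t0 s))\<^sup>2 / (real (nk n t0 s) - 1) * hk n t0 s * (1 - hk n t0 s)
         * phik p Q s * (1 - phik p Q s)
         * (Gmix p Q s - (1 - (1 - Gmix p Q s) ^ nk n t0 s) / real (nk n t0 s))"
  using logrank_stratum.integral_hypergeom_variance_eq[OF logrank_stratum_uncensored_at[OF assms]]
    measure_uncensored_at[OF assms]
  by (simp add: nk_def hk_def dk_def phik_def risk_set_def event_set_def)

theorem theorem3:
  fixes M :: "'a measure" and n :: nat and p1 :: real
    and t1 t0 :: "nat \<Rightarrow> real"
    and Z :: "nat \<Rightarrow> 'a \<Rightarrow> bool"
    and C1 C0 :: "nat \<Rightarrow> 'a \<Rightarrow> ennreal"
    and Q :: "(ennreal \<times> ennreal) measure"
  assumes "prob_space M"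
    and "0 < p1" and "p1 < 1"
    and "\<And>i. i < n \<Longrightarrow> 0 \<le> t1 i" and "\<And>i. i < n \<Longrightarrow> 0 \<le> t0 i"
    and H0: "\<And>i. i < n \<Longrightarrow> t1 i = t0 i"
    and "prob_space Q" and "sets Q = sets (borel :: (ennreal \<times> ennreal) measure)"
    and measZ: "\<And>i. i < n \<Longrightarrow> Z i \<in> measurable M (count_space UNIV)"
    and measC: "\<And>i. i < n \<Longrightarrow> (\<lambda>\<omega>. (C1 i \<omega>, C0 i \<omega>)) \<in> borel_measurable M"
    and joint: "distr M (PiM {..<n} (\<lambda>_. count_space UNIV \<Otimes>\<^sub>M (borel :: (ennreal \<times> ennreal) measure)))
                  (\<lambda>\<omega>. \<lambda>i\<in>{..<n}. (Z i \<omega>, (C1 i \<omega>, C0 i \<omega>)))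
               = PiM {..<n} (\<lambda>_. measure_pmf (bernoulli_pmf p1) \<Otimes>\<^sub>M Q)"
  shows "prob_space.expectation M (\<lambda>\<omega>. logrankL n t1 t0 (\<lambda>i. C1 i \<omega>) (\<lambda>i. C0 i \<omega>) (\<lambda>i. Z i \<omega>)) = 0
    \<and> prob_space.variance M (\<lambda>\<omega>. logrankL n t1 t0 (\<lambda>i. C1 i \<omega>) (\<lambda>i. C0 i \<omega>) (\<lambda>i. Z i \<omega>))
        = prob_space.expectation M (\<lambda>\<omega>. logrankU n t1 t0 (\<lambda>i. C1 i \<omega>) (\<lambda>i. C0 i \<omega>) (\<lambda>i. Z i \<omega>))
    \<and> prob_space.expectation M (\<lambda>\<omega>. logrankU n t1 t0 (\<lambda>i. C1 i \<omega>) (\<lambda>i. C0 i \<omega>) (\<lambda>i. Z i \<omega>))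
        = (\<Sum>s\<in>times0 n t0. prob_space.expectation M
             (\<lambda>\<omega>. Vk n t1 t0 (\<lambda>i. C1 i \<omega>) (\<lambda>i. C0 i \<omega>) (\<lambda>i. Z i \<omega>) s))
    \<and> (\<Sum>s\<in>times0 n t0. prob_space.expectation M
             (\<lambda>\<omega>. Vk n t1 t0 (\<lambda>i. C1 i \<omega>) (\<lambda>i. C0 i \<omega>) (\<lambda>i. Z i \<omega>) s))
        = (\<Sum>s\<in>times0 n t0.
             (real (nk n t0 s))\<^sup>2 / (real (nk n t0 s) - 1) * hk n t0 s * (1 - hk n t0 s)
             * phik p1 Q s * (1 - phik p1 Q s)
             * (Gmix p1 Q s - (1 - (1 - Gmix p1 Q s) ^ nk n t0 s) / real (nk n t0 s)))"
proof -
  interpret M: prob_space M by fact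
  define \<nu> where "\<nu> = measure_pmf (bernoulli_pmf p1) \<Otimes>\<^sub>M Q"
  define X where "X \<omega> = (\<lambda>i\<in>{..<n}. (Z i \<omega>, C1 i \<omega>, C0 i \<omega>))" for \<omega>
  define S where "S = times0 n t0"
  let ?X = "\<lambda>s x. logrank_increment (risk_set n t0 s) (event_set n t0 s) (uncensored_at s \<circ> x) (fst \<circ> x)"
  let ?V = "\<lambda>s x. hypergeom_variance (risk_set n t0 s) (event_set n t0 s) (uncensored_at s \<circ> x) (fst \<circ> x)"
  have stratum: "logrank_stratum \<nu> {..<n} (risk_set n t0 s) (event_set n t0 s) (uncensored_at s) fst" for s
    unfolding \<nu>_def using assms by (intro logrank_stratum_uncensored_at) auto
  interpret iid_units \<nu> "{..<n}" using stratum by (rule logrank_stratum.axioms)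
  have transfer: "M.expectation (\<lambda>\<omega>. F (X \<omega>)) = (\<integral>x. F x \<partial>\<Omega>)"
    if "F \<in> borel_measurable \<Omega>" for F :: "_ \<Rightarrow> real"
    unfolding X_def \<nu>_def by (rule integral_unit_data) (use assms that \<nu>_def in auto)
  have L: "logrankL n t1 t0 (\<lambda>i. C1 i \<omega>) (\<lambda>i. C0 i \<omega>) (\<lambda>i. Z i \<omega>) = (\<Sum>s\<in>S. ?X s (X \<omega>))" for \<omega>
    unfolding S_def by (rule logrankL_eq) (simp_all add: assms X_def)
  have U: "logrankU n t1 t0 (\<lambda>i. C1 i \<omega>) (\<lambda>i. C0 i \<omega>) (\<lambda>i. Z i \<omega>) = (\<Sum>s\<in>S. ?V s (X \<omega>))" for \<omega>
    unfolding S_def by (rule logrankU_eq) (simp_all add: assms X_def)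
  have V: "Vk n t1 t0 (\<lambda>i. C1 i \<omega>) (\<lambda>i. C0 i \<omega>) (\<lambda>i. Z i \<omega>) s = ?V s (X \<omega>)" if "s \<in> S" for s \<omega>
    using that assms(5) by (intro Vk_eq[where x = "X \<omega>"]) (auto simp: assms X_def S_def times0_def)
  have measurable_X: "?X s \<in> borel_measurable \<Omega>" and integrable_V: "integrable \<Omega> (?V s)" for s
    using stratum
    by (rule logrank_stratum.measurable_statistics logrank_stratum.integrable_hypergeom_variance)+
  have "finite S" by (simp add: S_def times0_def)
  have EL: "M.expectation (\<lambda>\<omega>. logrankL n t1 t0 (\<lambda>i. C1 i \<omega>) (\<lambda>i. C0 i \<omega>) (\<lambda>i. Z i \<omega>)) = 0"
    unfolding L using transfer[of "\<lambda>x. \<Sum>s\<in>S. ?X s x"] measurable_X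
    by (simp add: borel_measurable_sum integral_sum_logrank_increments stratum)
  have EV: "M.expectation (\<lambda>\<omega>. Vk n t1 t0 (\<lambda>i. C1 i \<omega>) (\<lambda>i. C0 i \<omega>) (\<lambda>i. Z i \<omega>) s) = (\<integral>x. ?V s x \<partial>\<Omega>)"
    if "s \<in> S" for s
    using transfer[of "?V s"] integrable_V by (simp add: V[OF that] borel_measurable_integrable)
  show ?thesis
    unfolding S_def[symmetric]
  proof (intro conjI EL)
    show "M.variance (\<lambda>\<omega>. logrankL n t1 t0 (\<lambda>i. C1 i \<omega>) (\<lambda>i. C0 i \<omega>) (\<lambda>i. Z i \<omega>))
        = M.expectation (\<lambda>\<omega>. logrankU n t1 t0 (\<lambda>i. C1 i \<omega>) (\<lambda>i. C0 i \<omega>) (\<lambda>i. Z i \<omega>))"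
      unfolding L U using EL[unfolded L] transfer[of "\<lambda>x. (\<Sum>s\<in>S. ?X s x)\<^sup>2"] transfer[of "\<lambda>x. \<Sum>s\<in>S. ?V s x"]
        measurable_X integrable_V \<open>finite S\<close>
      by (simp add: borel_measurable_sum borel_measurable_integrable Bochner_Integration.integral_sum
          integral_sq_sum_logrank_increments stratum risk_sets_nested)
    show "M.expectation (\<lambda>\<omega>. logrankU n t1 t0 (\<lambda>i. C1 i \<omega>) (\<lambda>i. C0 i \<omega>) (\<lambda>i. Z i \<omega>))
        = (\<Sum>s\<in>S. M.expectation (\<lambda>\<omega>. Vk n t1 t0 (\<lambda>i. C1 i \<omega>) (\<lambda>i. C0 i \<omega>) (\<lambda>i. Z i \<omega>) s))"
      unfolding U using transfer[of "\<lambda>x. \<Sum>s\<in>S. ?V s x"] integrable_V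
      by (simp add: EV Bochner_Integration.integral_sum borel_measurable_integrable)
  qed (use assms(2,3,7,8) in \<open>simp add: EV \<nu>_def integral_hypergeom_variance_uncensored_at\<close>)
qed

end
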